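(* Let $L>0$, $d_S>0$, $\Lambda>0$ a constant, and $\beta,\gamma,\eta$ positive H\"older continuous functions on $[0,L]$; set $h=(\gamma+\eta)/\beta$, $h_{min}=\min_{[0,L]}h$, $\Theta_h=\{x\in[0,L]: h(x)=h_{min}\}$, and assume $\Lambda>h(x)$ for all $x\in[0,L]$. Let $d_{I,n}\to0$ and let $(S_n,I_n)$ be endemic equilibria (positive $C^2([0,L])$ solutions of $-d_S S_{xx}=\Lambda-S-\beta SI+\gamma I$, $-d_{I,n}I_{xx}=\beta SI-(\gamma+\eta)I$ in $(0,L)$, $S_x=I_x=0$ at $x=0,L$) such that $S_n\to\hat S$ uniformly on $[0,L]$ and $\int_0^L I_n\zeta\,{\rm d}x\to\int_{[0,L]}\zeta\,{\rm d}\mu$ for all $\zeta\in C([0,L])$, for some finite nonnegative Borel measure $\mu$ on $[0,L]$. Assume $h\in C^2([0,L])$, $\Theta_h=[\varrho_1,\varrho_2]$ with $0<\varrho_1<\varrho_2<L$, and $h_x$ is non-decreasing on $[0,\varrho_1]\cup[\varrho_2,L]$. Then there exist $\tau_1,\tau_2$ with $0<\tau_1<\varrho_1<\varrho_2<\tau_2<L$ such that $\hat S(x)=h(x)$ for all $x\in[\tau_1,\tau_2]$; $\hat S$ satisfies $-d_S\hat S_{xx}=\Lambda-\hat S$ in $(0,\tau_1)\cup(\tau_2,L)$, $\hat S_x(0)=\hat S_x(L)=0$, $\hat S(\tau_1)=h(\tau_1)$, $\hat S(\tau_2)=h(\tau_2)$; on $(\tau_1,\tau_2)$ the measure $\mu$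 has density $\frac{\Lambda-h+d_Sh_{xx}}{\eta}$ with respect to Lebesgue measure; and $\mu([0,\tau_1)\cup(\tau_2,L])=0$.
   Context: "$\mu$ has density $f$ on an open interval $J$" means $\mu(A)=\int_A f\,{\rm d}x$ for every Borel set $A\subset J$. *)

theory Defs
  imports "HOL-Analysis.Analysis"
begin

definition holder_on :: "real set \<Rightarrow> (real \<Rightarrow> real) \<Rightarrow> bool" where
  "holder_on A f \<longleftrightarrow> (\<exists>\<alpha> C. 0 < \<alpha> \<and> \<alpha> \<le> 1 \<and>
      (\<forall>x\<in>A. \<forall>y\<in>A. \<bar>f x - f y\<bar> \<le> C * \<bar>x - y\<bar> powr \<alpha>))"

definition C2_with :: "real set \<Rightarrow> (real \<Rightarrow> real) \<Rightarrow> (real \<Rightarrow> real) \<Rightarrow> (real \<Rightarrow> real) \<Rightarrow> bool" where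
  "C2_with A f f1 f2 \<longleftrightarrow>
     (\<forall>x\<in>A. (f has_real_derivative f1 x) (at x within A) \<and>
             (f1 has_real_derivative f2 x) (at x within A)) \<and> continuous_on A f2"

definition endemic_eq ::
  "real \<Rightarrow> real \<Rightarrow> real \<Rightarrow> (real \<Rightarrow> real) \<Rightarrow> (real \<Rightarrow> real) \<Rightarrow> (real \<Rightarrow> real) \<Rightarrow> real
     \<Rightarrow> (real \<Rightarrow> real) \<Rightarrow> (real \<Rightarrow> real) \<Rightarrow> bool" where
  "endemic_eq L dS \<Lambda> \<beta> \<gamma> \<eta> dI S I \<longleftrightarrow>
    (\<exists>S1 S2 I1 I2. C2_with {0..L} S S1 S2 \<and> C2_with {0..L} I I1 I2 \<and>
      (\<forall>x\<in>{0..L}. S x > 0 \<and> I x > 0) \<and>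
      (\<forall>x\<in>{0<..<L}.
          - dS * S2 x = \<Lambda> - S x - \<beta> x * S x * I x + \<gamma> x * I x \<and>
          - dI * I2 x = \<beta> x * S x * I x - (\<gamma> x + \<eta> x) * I x) \<and>
      S1 0 = 0 \<and> S1 L = 0 \<and> I1 0 = 0 \<and> I1 L = 0)"

end

theory Submission
  imports Defs "HOL-Analysis.Analysis"
begin

text \<open>
  Adding the two equations, $F_n = d_S S_n + d_{I,n} I_n$ satisfies
  $F_n'' = S_n - \Lambda + \eta I_n$ with Neumann data, so $F_n$ is recovered from its second
  derivative by integrating against the continuous kernels $(x - s)^+$ and $(s - x)^+$. Since
  $\int I_n$ stays bounded and the $I$-equation keeps $d_{I,n} I_n'$ bounded, $d_{I,n} I_n \to 0$, and
  in the limit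
  \[ d_S \hat S(x) = d_S \hat S(0) + \int_0^x (x - s)(\hat S - \Lambda)\,ds
       + \int (x - s)^+ \eta(s)\,d\mu(s). \]
  The $I$-equation also shows $\hat S \le h$ (otherwise $I_n$ would be a positive supersolution
  with principal eigenvalue of order $1/d_{I,n}$) and that $\mu$ vanishes where $\hat S < h$
  (test it against cubic bumps). Hence off the contact set $\{\hat S = h\}$ the $\mu$-term is
  affine and $d_S \hat S'' = \hat S - \Lambda$ there. Comparing one-sided derivatives of $h$ and
  $\hat S$ where they touch, and using that $h'$ is nondecreasing and vanishes exactly on
  $\Theta_h$, shows that the contact set is an interval $[\tau_1, \tau_2] \supset \Theta_h$ in the
  interior. On it $\hat S = h$, so the limit identity makes the $\mu$-ramp $C^2$ with second
  derivative $\Lambda - h + d_S h''$, which is therefore the density of $\eta\mu$.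
\<close>

section \<open>Second-order calculus on an interval\<close>

lemma holder_on_imp_continuous_on:
  assumes "holder_on A f"
  shows "continuous_on A f"
proof -
  obtain \<alpha> C where \<alpha>: "0 < \<alpha>" and H: "\<forall>x\<in>A. \<forall>y\<in>A. \<bar>f x - f y\<bar> \<le> C * \<bar>x - y\<bar> powr \<alpha>"
    using assms unfolding holder_on_def by blast
  show ?thesis
    unfolding continuous_on_def
  proof
    fix x assume x: "x \<in> A"
    have "((\<lambda>y. \<bar>y - x\<bar>) \<longlongrightarrow> \<bar>x - x\<bar>) (at x within A)"
      by (intro tendsto_intros)
    then have "((\<lambda>y. \<bar>y - x\<bar> powr \<alpha>) \<longlongrightarrow> 0) (at x within A)"
      using \<alpha> by (intro tendsto_zero_powrI) auto
    then have "((\<lambda>y. C * \<bar>y - x\<bar> powr \<alpha>) \<longlongrightarrow> 0) (at x within A)"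
      by (rule tendsto_mult_right_zero)
    moreover have "\<forall>\<^sub>F y in at x within A. norm (f y - f x) \<le> C * \<bar>y - x\<bar> powr \<alpha>"
      unfolding eventually_at_filter by (rule always_eventually) (use H x in auto)
    ultimately have "((\<lambda>y. f y - f x) \<longlongrightarrow> 0) (at x within A)"
      by (rule Lim_null_comparison[rotated])
    then show "(f \<longlongrightarrow> f x) (at x within A)"
      by (simp add: LIM_zero_iff)
  qed
qed

lemma C2_with_continuous_on:
  assumes "C2_with A f f1 f2"
  shows "continuous_on A f" "continuous_on A f1" "continuous_on A f2"
  using assms unfolding C2_with_def
  by (meson DERIV_continuous continuous_on_eq_continuous_within)+

lemma C2_with_subset:
  assumes "C2_with A f f1 f2" "B \<subseteq> A"
  shows "C2_with B f f1 f2"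
  using assms unfolding C2_with_def by (auto intro: DERIV_subset continuous_on_subset)

lemma C2_with_lincomb:
  assumes "C2_with A f f1 f2" "C2_with A g g1 g2"
  shows "C2_with A (\<lambda>x. a * f x + b * g x) (\<lambda>x. a * f1 x + b * g1 x) (\<lambda>x. a * f2 x + b * g2 x)"
  using assms unfolding C2_with_def by (auto intro!: DERIV_add DERIV_cmult continuous_intros)

lemma C2_with_interior:
  assumes "C2_with A f f1 f2" "x \<in> interior A"
  shows "(f has_real_derivative f1 x) (at x)" "(f1 has_real_derivative f2 x) (at x)"
  using assms interior_subset[of A] at_within_interior[OF assms(2)]
  unfolding C2_with_def by (metis subsetD)+

lemma C2_with_cubic_bump:
  "C2_with A (\<lambda>x. ((x - a) * (b - x)) ^ 3)
    (\<lambda>x. 3 * ((x - a) * (b - x))\<^sup>2 * (a + b - 2 * x))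
    (\<lambda>x. 6 * ((x - a) * (b - x)) * (a + b - 2 * x)\<^sup>2 - 6 * ((x - a) * (b - x))\<^sup>2)"
  unfolding C2_with_def
  by (auto intro!: derivative_eq_intros continuous_intros simp: algebra_simps power2_eq_square)

lemma continuous_on_Icc_eq_if_eq_on_Ioo:
  fixes f g :: "real \<Rightarrow> real"
  assumes "a < b" "continuous_on {a..b} f" "continuous_on {a..b} g"
    and "\<And>x. x \<in> {a<..<b} \<Longrightarrow> f x = g x" and "x \<in> {a..b}"
  shows "f x = g x"
proof -
  have "continuous_on (closure {a<..<b}) (\<lambda>x. f x - g x)"
    using assms by (auto intro!: continuous_intros)
  then have "norm (f x - g x) \<le> 0"
    by (rule continuous_on_closure_norm_le) (use assms in auto)
  then show ?thesis by simp
qed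

lemma zero_derivative_Icc_eq:
  fixes f :: "real \<Rightarrow> real"
  assumes "\<And>x. x \<in> {a..b} \<Longrightarrow> (f has_real_derivative 0) (at x within {a..b})"
    and "x \<in> {a..b}" "y \<in> {a..b}"
  shows "f x = f y"
  using has_field_derivative_zero_constant[of "{a..b}" f] assms by fastforce

text \<open>The kernels $(x - s)^+$ and $(s - x)^+$ are continuous in $s$ on the whole interval, so the
  ramp integrals of $I_n$ converge under weak convergence of $I_n$.\<close>

definition ramp_left :: "real \<Rightarrow> real \<Rightarrow> (real \<Rightarrow> real) \<Rightarrow> real \<Rightarrow> real" where
  "ramp_left a b f x = integral {a..b} (\<lambda>s. max (x - s) 0 * f s)"

definition ramp_right :: "real \<Rightarrow> real \<Rightarrow> (real \<Rightarrow> real) \<Rightarrow> real \<Rightarrow> real" where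
  "ramp_right a b f x = integral {a..b} (\<lambda>s. max (s - x) 0 * f s)"

lemma ramp_left_eq_integral:
  assumes f: "continuous_on {a..b} f" and x: "x \<in> {a..b}"
  shows "ramp_left a b f x = integral {a..x} (\<lambda>s. (x - s) * f s)"
proof -
  let ?g = "\<lambda>s. max (x - s) 0 * f s"
  have "?g integrable_on {a..b}"
    by (rule integrable_continuous_interval) (auto intro!: continuous_intros f)
  then have "integral {a..x} ?g + integral {x..b} ?g = integral {a..b} ?g"
    using x by (intro Henstock_Kurzweil_Integration.integral_combine) auto
  moreover have "integral {x..b} ?g = 0"
    by (subst integral_cong[where g = "\<lambda>_. 0"]) auto
  moreover have "integral {a..x} ?g = integral {a..x} (\<lambda>s. (x - s) * f s)"
    by (rule integral_cong) auto
  ultimately show ?thesis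
    unfolding ramp_left_def by simp
qed

lemma ramp_right_eq_integral:
  assumes f: "continuous_on {a..b} f" and x: "x \<in> {a..b}"
  shows "ramp_right a b f x = integral {x..b} (\<lambda>s. (s - x) * f s)"
proof -
  let ?g = "\<lambda>s. max (s - x) 0 * f s"
  have "?g integrable_on {a..b}"
    by (rule integrable_continuous_interval) (auto intro!: continuous_intros f)
  then have "integral {a..x} ?g + integral {x..b} ?g = integral {a..b} ?g"
    using x by (intro Henstock_Kurzweil_Integration.integral_combine) auto
  moreover have "integral {a..x} ?g = 0"
    by (subst integral_cong[where g = "\<lambda>_. 0"]) auto
  moreover have "integral {x..b} ?g = integral {x..b} (\<lambda>s. (s - x) * f s)"
    by (rule integral_cong) auto
  ultimately show ?thesis
    unfolding ramp_right_def by simp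
qed

lemma has_real_derivative_ramp_left:
  assumes f: "continuous_on {a..b} f" and x: "x \<in> {a..b}"
  shows "(ramp_left a b f has_real_derivative integral {a..x} f) (at x within {a..b})"
proof -
  have eq: "ramp_left a b f y = y * integral {a..y} f - integral {a..y} (\<lambda>s. s * f s)"
    if y: "y \<in> {a..b}" for y
  proof -
    have "continuous_on {a..y} f"
      using y by (intro continuous_on_subset[OF f]) auto
    then have "(\<lambda>s. y * f s) integrable_on {a..y}" "(\<lambda>s. s * f s) integrable_on {a..y}"
      by (intro integrable_continuous_interval continuous_intros; assumption)+
    then show ?thesis
      by (simp add: ramp_left_eq_integral[OF f y] left_diff_distrib integral_diff)
  qed
  have "((\<lambda>y. y * integral {a..y} f - integral {a..y} (\<lambda>s. s * f s)) has_real_derivative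
      x * f x + 1 * integral {a..x} f - x * f x) (at x within {a..b})"
    using integral_has_real_derivative[OF f x]
      integral_has_real_derivative[OF continuous_on_mult[OF continuous_on_id f] x]
    by (intro DERIV_diff DERIV_mult' DERIV_ident)
  then have "((\<lambda>y. y * integral {a..y} f - integral {a..y} (\<lambda>s. s * f s)) has_real_derivative
      integral {a..x} f) (at x within {a..b})"
    by simp
  then show ?thesis
    by (rule has_field_derivative_transform_within[where d = 1]) (use x eq in auto)
qed

lemma ramp_right_eq_ramp_left:
  assumes f: "continuous_on {a..b} f"
  shows "ramp_right a b f x
    = ramp_left a b f x + integral {a..b} (\<lambda>s. s * f s) - x * integral {a..b} f"
proof -
  have "ramp_right a b f x = integral {a..b} (\<lambda>s. max (x - s) 0 * f s + (s * f s - x * f s))"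
    unfolding ramp_right_def by (rule integral_cong) (auto simp: max_def algebra_simps)
  also have "\<dots> = ramp_left a b f x + integral {a..b} (\<lambda>s. s * f s) - x * integral {a..b} f"
    unfolding ramp_left_def
    by (subst integral_add integral_diff integral_mult_left,
        auto intro!: integrable_continuous_interval continuous_intros f)+
  finally show ?thesis .
qed

lemma has_real_derivative_ramp_right:
  assumes f: "continuous_on {a..b} f" and x: "x \<in> {a..b}"
  shows "(ramp_right a b f has_real_derivative integral {a..x} f - integral {a..b} f)
    (at x within {a..b})"
  unfolding ramp_right_eq_ramp_left[OF f, abs_def]
  using DERIV_diff[OF DERIV_add[OF has_real_derivative_ramp_left[OF f x] DERIV_const]
      DERIV_cmult_right[OF DERIV_ident]]
  by simp

lemma Neumann_ramp_representation:
  assumes C2: "C2_with {a..b} F F1 F2" and F1_a: "F1 a = 0" and F1_b: "F1 b = 0"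
    and x: "x \<in> {a..b}"
  shows "F x = F a + ramp_left a b F2 x" "F x = F b + ramp_right a b F2 x"
proof -
  have ab: "a \<in> {a..b}" "b \<in> {a..b}" using x by auto
  have F2: "continuous_on {a..b} F2" using C2_with_continuous_on[OF C2] by simp
  have dF: "(F has_real_derivative F1 y) (at y within {a..b})"
    and dF1: "(F1 has_real_derivative F2 y) (at y within {a..b})" if "y \<in> {a..b}" for y
    using C2 that unfolding C2_with_def by auto
  have "F1 y - integral {a..y} F2 = F1 a - integral {a..a} F2" if y: "y \<in> {a..b}" for y
    by (rule zero_derivative_Icc_eq[OF _ y ab(1)])
      (use DERIV_diff[OF dF1 integral_has_real_derivative[OF F2]] in auto)
  then have F1_eq: "F1 y = integral {a..y} F2" if "y \<in> {a..b}" for y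
    using that F1_a by simp
  have "F x - ramp_left a b F2 x = F a - ramp_left a b F2 a"
    by (rule zero_derivative_Icc_eq[OF _ x ab(1)])
      (use DERIV_diff[OF dF has_real_derivative_ramp_left[OF F2]] F1_eq in auto)
  moreover have "ramp_left a b F2 a = 0"
    using ramp_left_eq_integral[OF F2 ab(1)] by simp
  ultimately show "F x = F a + ramp_left a b F2 x" by simp
  have "F x - ramp_right a b F2 x = F b - ramp_right a b F2 b"
    by (rule zero_derivative_Icc_eq[OF _ x ab(2)])
      (use DERIV_diff[OF dF has_real_derivative_ramp_right[OF F2]] F1_eq F1_b ab(2) in auto)
  moreover have "ramp_right a b F2 b = 0"
    using ramp_right_eq_integral[OF F2 ab(2)] by simp
  ultimately show "F x = F b + ramp_right a b F2 x" by simp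
qed

lemma abs_integral_le_length:
  fixes g :: "real \<Rightarrow> real"
  assumes "a \<le> b" "continuous_on {a..b} g" "\<And>s. s \<in> {a..b} \<Longrightarrow> \<bar>g s\<bar> \<le> B"
  shows "\<bar>integral {a..b} g\<bar> \<le> B * (b - a)"
proof -
  have B: "0 \<le> B" using assms(1) assms(3)[of a] by auto
  have "(g has_integral integral {a..b} g) (cbox a b)"
    using integrable_continuous_interval[OF assms(2)] by (simp add: has_integral_integral)
  from has_integral_bound[OF B this] show ?thesis using assms by auto
qed

lemma abs_ramp_left_le:
  assumes f: "continuous_on {a..b} f" and M: "\<And>s. s \<in> {a..b} \<Longrightarrow> \<bar>f s\<bar> \<le> M"
    and x: "x \<in> {a..b}"
  shows "\<bar>ramp_left a b f x\<bar> \<le> M * (x - a)\<^sup>2"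
proof -
  have "\<bar>integral {a..x} (\<lambda>s. (x - s) * f s)\<bar> \<le> ((x - a) * M) * (x - a)"
  proof (rule abs_integral_le_length)
    show "continuous_on {a..x} (\<lambda>s. (x - s) * f s)"
      using x by (intro continuous_intros continuous_on_subset[OF f]) auto
    fix s assume s: "s \<in> {a..x}"
    then show "\<bar>(x - s) * f s\<bar> \<le> (x - a) * M"
      unfolding abs_mult using x M[of s] by (intro mult_mono) auto
  qed (use x in auto)
  also have "\<dots> = M * (x - a)\<^sup>2"
    by (simp add: power2_eq_square algebra_simps)
  finally show ?thesis
    using ramp_left_eq_integral[OF f x] by simp
qed

lemma abs_ramp_right_le:
  assumes f: "continuous_on {a..b} f" and M: "\<And>s. s \<in> {a..b} \<Longrightarrow> \<bar>f s\<bar> \<le> M"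
    and x: "x \<in> {a..b}"
  shows "\<bar>ramp_right a b f x\<bar> \<le> M * (b - x)\<^sup>2"
proof -
  have "\<bar>integral {x..b} (\<lambda>s. (s - x) * f s)\<bar> \<le> ((b - x) * M) * (b - x)"
  proof (rule abs_integral_le_length)
    show "continuous_on {x..b} (\<lambda>s. (s - x) * f s)"
      using x by (intro continuous_intros continuous_on_subset[OF f]) auto
    fix s assume s: "s \<in> {x..b}"
    then show "\<bar>(s - x) * f s\<bar> \<le> (b - x) * M"
      unfolding abs_mult using x M[of s] by (intro mult_mono) auto
  qed (use x in auto)
  also have "\<dots> = M * (b - x)\<^sup>2"
    by (simp add: power2_eq_square algebra_simps)
  finally show ?thesis
    using ramp_right_eq_integral[OF f x] by simp
qed

lemma continuous_on_Icc_abs_bound: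
  fixes f :: "real \<Rightarrow> real"
  assumes "continuous_on {a..b} f"
  obtains M where "\<And>x. x \<in> {a..b} \<Longrightarrow> \<bar>f x\<bar> \<le> M"
proof -
  obtain M where "\<forall>x\<in>{a..b}. norm (f x) \<le> M"
    using compact_imp_bounded[OF compact_continuous_image[OF assms compact_Icc]]
    unfolding bounded_iff by auto
  then show ?thesis by (intro that) auto
qed

lemma continuous_on_Icc_pos_lower_bound:
  fixes f :: "real \<Rightarrow> real"
  assumes "continuous_on {a..b} f" and "\<And>x. x \<in> {a..b} \<Longrightarrow> 0 < f x"
  obtains c where "0 < c" "\<And>x. x \<in> {a..b} \<Longrightarrow> c \<le> f x"
proof (cases "a \<le> b")
  case True
  then obtain x0 where "x0 \<in> {a..b}" "\<And>y. y \<in> {a..b} \<Longrightarrow> f x0 \<le> f y"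
    using continuous_attains_inf[OF compact_Icc _ assms(1)] by auto
  then show ?thesis using assms(2) that by blast
next
  case False
  then show ?thesis by (intro that[of 1]) auto
qed

lemma Green_identity_has_integral:
  fixes u u1 u2 p p1 p2 :: "real \<Rightarrow> real"
  assumes "a \<le> b" and u: "C2_with {a..b} u u1 u2" and p: "C2_with {a..b} p p1 p2"
  shows "((\<lambda>x. u2 x * p x - u x * p2 x) has_integral
    (u1 b * p b - u b * p1 b) - (u1 a * p a - u a * p1 a)) {a..b}"
proof (rule fundamental_theorem_of_calculus[OF \<open>a \<le> b\<close>])
  fix x assume x: "x \<in> {a..b}"
  have "((\<lambda>x. u1 x * p x - u x * p1 x) has_real_derivative
      u1 x * p1 x + u2 x * p x - (u x * p2 x + u1 x * p1 x)) (at x within {a..b})"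
    using u p x unfolding C2_with_def by (intro DERIV_diff DERIV_mult') auto
  then show "((\<lambda>x. u1 x * p x - u x * p1 x) has_vector_derivative u2 x * p x - u x * p2 x)
      (at x within {a..b})"
    by (simp add: has_real_derivative_iff_has_vector_derivative[symmetric] algebra_simps)
qed

text \<open>The principal Dirichlet eigenvalue of $-u''$ on $[a,b]$ is $(\pi/(b-a))^2$: testing
  $u'' \le -\kappa u$ against the principal eigenfunction $\sin(\pi(x-a)/(b-a))$ leaves only the
  positive boundary terms.\<close>

lemma positive_supersolution_eigenvalue_le:
  fixes u u1 u2 :: "real \<Rightarrow> real"
  assumes ab: "a < b" and u: "C2_with {a..b} u u1 u2"
    and pos: "\<And>x. x \<in> {a..b} \<Longrightarrow> 0 < u x"
    and super: "\<And>x. x \<in> {a..b} \<Longrightarrow> u2 x \<le> - \<kappa> * u x"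
  shows "\<kappa> \<le> (pi / (b - a))\<^sup>2"
proof (rule ccontr)
  assume "\<not> \<kappa> \<le> (pi / (b - a))\<^sup>2"
  define \<omega> where "\<omega> = pi / (b - a)"
  have \<omega>: "0 < \<omega>" "\<omega> * (b - a) = pi" "\<omega>\<^sup>2 < \<kappa>"
    unfolding \<omega>_def using ab \<open>\<not> _\<close> by auto
  define \<psi> \<psi>1 \<psi>2 where "\<psi> x = sin (\<omega> * (x - a))" and "\<psi>1 x = \<omega> * cos (\<omega> * (x - a))"
    and "\<psi>2 x = - \<omega>\<^sup>2 * sin (\<omega> * (x - a))" for x
  have "C2_with {a..b} \<psi> \<psi>1 \<psi>2"
    unfolding C2_with_def \<psi>_def \<psi>1_def \<psi>2_def
    by (auto intro!: derivative_eq_intros continuous_intros simp: power2_eq_square)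
  from Green_identity_has_integral[OF less_imp_le[OF ab] u this]
  have "((\<lambda>x. u2 x * \<psi> x - u x * \<psi>2 x) has_integral \<omega> * (u a + u b)) {a..b}"
    using \<omega> by (simp add: \<psi>_def \<psi>1_def algebra_simps)
  moreover have "u2 x * \<psi> x - u x * \<psi>2 x \<le> 0" if x: "x \<in> {a..b}" for x
  proof -
    have "0 \<le> \<omega> * (x - a)" "\<omega> * (x - a) \<le> pi"
      using x \<omega> by (auto intro: order_trans[OF mult_left_mono[of "x - a" "b - a" \<omega>]])
    then have "0 \<le> \<psi> x" unfolding \<psi>_def by (rule sin_ge_zero)
    then have "u2 x * \<psi> x \<le> - \<kappa> * u x * \<psi> x"
      using super[OF x] by (rule mult_right_mono[rotated])
    moreover have "\<omega>\<^sup>2 * (u x * \<psi> x) \<le> \<kappa> * (u x * \<psi> x)"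
      using \<omega> pos[OF x] \<open>0 \<le> \<psi> x\<close> by (intro mult_right_mono) auto
    ultimately show ?thesis
      unfolding \<psi>2_def \<psi>_def by (simp add: algebra_simps)
  qed
  ultimately have "\<omega> * (u a + u b) \<le> 0"
    using has_integral_le[OF _ has_integral_0] by blast
  moreover have "0 < \<omega> * (u a + u b)"
    using \<omega> pos ab by (simp add: add_pos_pos)
  ultimately show False by simp
qed

lemma lipschitz_nonneg_integral_lower_bound:
  fixes u :: "real \<Rightarrow> real"
  assumes lip: "K-lipschitz_on {a..b} u" and cont: "continuous_on {a..b} u"
    and nonneg: "\<And>y. y \<in> {a..b} \<Longrightarrow> 0 \<le> u y"
    and x: "x \<in> {a..b}" and r: "0 < r" "r \<le> b - a"
  shows "r * (u x - K * r) \<le> integral {a..b} u"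
proof -
  define c where "c = min x (b - r)"
  have c: "a \<le> c" "c + r \<le> b" "c \<le> x" "x \<le> c + r"
    unfolding c_def using x r by auto
  then have sub: "{c..c + r} \<subseteq> {a..b}" by auto
  have "u x - K * r \<le> u y" if y: "y \<in> {c..c + r}" for y
  proof -
    have "dist (u y) (u x) \<le> K * dist y x"
      using lip x sub y by (intro lipschitz_onD) auto
    moreover have "K * dist y x \<le> K * r"
      using y c lipschitz_on_nonneg[OF lip] by (intro mult_left_mono) (auto simp: dist_real_def)
    ultimately show ?thesis by (simp add: dist_real_def)
  qed
  then have "r * (u x - K * r) \<le> integral {c..c + r} u"
    using r integral_le[of "\<lambda>_. u x - K * r" "{c..c + r}" u]
    by (simp add: integrable_continuous_interval continuous_on_subset[OF cont sub])
  also have "\<dots> \<le> integral {a..b} u"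
    using nonneg sub
    by (intro integral_subset_le integrable_continuous_interval cont continuous_on_subset[OF cont])
      auto
  finally show ?thesis .
qed

lemma tendsto_zero_if_lipschitz_and_integral_tendsto_zero:
  fixes u :: "nat \<Rightarrow> real \<Rightarrow> real"
  assumes ab: "a < b" and x: "x \<in> {a..b}"
    and nonneg: "\<And>n y. y \<in> {a..b} \<Longrightarrow> 0 \<le> u n y"
    and cont: "\<And>n. continuous_on {a..b} (u n)"
    and lip: "\<forall>\<^sub>F n in sequentially. K-lipschitz_on {a..b} (u n)"
    and int: "(\<lambda>n. integral {a..b} (u n)) \<longlonglongrightarrow> 0"
  shows "(\<lambda>n. u n x) \<longlonglongrightarrow> 0"
  unfolding tendsto_iff
proof (intro allI impI)
  fix e :: real assume e: "0 < e"
  obtain n0 where "K-lipschitz_on {a..b} (u n0)"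
    using eventually_happens'[OF sequentially_bot lip] by blast
  then have K: "0 \<le> K"
    by (rule lipschitz_on_nonneg)
  define r where "r = min (b - a) (e / (2 * K + 1))"
  have r: "0 < r" "r \<le> b - a" "K * r \<le> e / 2"
  proof -
    have "K * (e / (2 * K + 1)) \<le> e / 2"
      using K e by (simp add: field_simps)
    moreover have "K * r \<le> K * (e / (2 * K + 1))"
      unfolding r_def using K by (intro mult_left_mono) auto
    ultimately show "K * r \<le> e / 2" by linarith
  qed (use ab e K in \<open>auto simp: r_def\<close>)
  have "\<forall>\<^sub>F n in sequentially. integral {a..b} (u n) < r * (e / 2)"
    using order_tendstoD(2)[OF int, of "r * (e / 2)"] r e by simp
  with lip show "\<forall>\<^sub>F n in sequentially. dist (u n x) 0 < e"
  proof eventually_elim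
    case (elim n)
    have "r * (u n x - K * r) \<le> integral {a..b} (u n)"
      by (rule lipschitz_nonneg_integral_lower_bound[OF elim(1) cont nonneg x r(1,2)])
    moreover have "K * r * r \<le> e / 2 * r"
      using r by (intro mult_right_mono) auto
    ultimately have "r * u n x < r * e"
      using elim(2) by (simp add: algebra_simps)
    then show ?case
      using nonneg[OF x, of n] r by (simp add: dist_real_def)
  qed
qed

lemma deriv_nonneg_at_left_end:
  fixes f :: "real \<Rightarrow> real"
  assumes f': "(f has_real_derivative D) (at a within {a..b})" and ab: "a < b"
    and bound: "\<And>y. y \<in> {a..b} \<Longrightarrow> f a - K * (y - a)\<^sup>2 \<le> f y"
  shows "0 \<le> D"
proof -
  have "((\<lambda>y. (f y - f a) / (y - a)) \<longlongrightarrow> D) (at_right a)"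
    using f' unfolding has_field_derivative_iff at_within_Icc_at_right[OF ab] .
  moreover have "((\<lambda>y. - K * (y - a)) \<longlongrightarrow> - K * (a - a)) (at_right a)"
    by (intro tendsto_intros)
  moreover have "\<forall>\<^sub>F y in at_right a. - K * (y - a) \<le> (f y - f a) / (y - a)"
    using eventually_at_right_real[OF ab]
  proof eventually_elim
    case (elim y)
    then have "- K * (y - a)\<^sup>2 / (y - a) \<le> (f y - f a) / (y - a)"
      using bound[of y] by (intro divide_right_mono) auto
    then show ?case
      using elim by (simp add: power2_eq_square)
  qed
  ultimately show ?thesis
    using tendsto_le[OF trivial_limit_at_right_real] by fastforce
qed

lemma deriv_nonpos_at_right_end:
  fixes f :: "real \<Rightarrow> real"
  assumes f': "(f has_real_derivative D) (at b within {a..b})" and ab: "a < b"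
    and bound: "\<And>y. y \<in> {a..b} \<Longrightarrow> f b - K * (b - y)\<^sup>2 \<le> f y"
  shows "D \<le> 0"
proof -
  have "((\<lambda>y. (f y - f b) / (y - b)) \<longlongrightarrow> D) (at_left b)"
    using f' unfolding has_field_derivative_iff at_within_Icc_at_left[OF ab] .
  moreover have "((\<lambda>y. K * (b - y)) \<longlongrightarrow> K * (b - b)) (at_left b)"
    by (intro tendsto_intros)
  moreover have "\<forall>\<^sub>F y in at_left b. (f y - f b) / (y - b) \<le> K * (b - y)"
    using eventually_at_left_real[OF ab]
  proof eventually_elim
    case (elim y)
    then have "(f b - f y) / (b - y) \<le> K * (b - y)\<^sup>2 / (b - y)"
      using bound[of y] by (intro divide_right_mono) auto
    moreover have "(f y - f b) / (y - b) = (f b - f y) / (b - y)"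
      using minus_divide_divide[of "f b - f y" "b - y"] by simp
    ultimately show ?case
      using elim by (simp add: power2_eq_square)
  qed
  ultimately show ?thesis
    using tendsto_le[OF trivial_limit_at_left_real] by fastforce
qed

text \<open>A function with nondecreasing derivative is convex, hence below the chord.\<close>

lemma nonpos_if_mono_deriv_and_zero_at_ends:
  fixes \<phi> \<phi>' :: "real \<Rightarrow> real"
  assumes x: "x \<in> {p..q}" and cont: "continuous_on {p..q} \<phi>"
    and deriv: "\<And>z. z \<in> {p<..<q} \<Longrightarrow> (\<phi> has_real_derivative \<phi>' z) (at z)"
    and mono: "mono_on {p<..<q} \<phi>'" and ends: "\<phi> p = 0" "\<phi> q = 0"
  shows "\<phi> x \<le> 0"
proof (rule ccontr)
  assume "\<not> \<phi> x \<le> 0"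
  then have pos: "0 < \<phi> x" and px: "p < x" and xq: "x < q"
    using x ends by (auto simp: less_le)
  have diff: "\<phi> differentiable (at z)" if "z \<in> {p<..<q}" for z
    using deriv[OF that] by (auto simp: real_differentiable_def)
  obtain l1 z1 where z1: "p < z1" "z1 < x" "(\<phi> has_real_derivative l1) (at z1)"
    "\<phi> x - \<phi> p = (x - p) * l1"
    using MVT[OF px continuous_on_subset[OF cont]] diff xq by auto
  obtain l2 z2 where z2: "x < z2" "z2 < q" "(\<phi> has_real_derivative l2) (at z2)"
    "\<phi> q - \<phi> x = (q - x) * l2"
    using MVT[OF xq continuous_on_subset[OF cont]] diff px by auto
  have "l1 = \<phi>' z1" "l2 = \<phi>' z2"
    using DERIV_unique[OF z1(3) deriv[of z1]] DERIV_unique[OF z2(3) deriv[of z2]] z1 z2 px xq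
    by auto
  with z1 z2 have z1: "p < z1" "z1 < x" "\<phi> x - \<phi> p = (x - p) * \<phi>' z1"
    and z2: "x < z2" "z2 < q" "\<phi> q - \<phi> x = (q - x) * \<phi>' z2"
    by auto
  have "0 < \<phi>' z1" using z1 px pos ends by (simp add: zero_less_mult_iff)
  moreover have "\<phi>' z2 < 0"
  proof -
    have "(q - x) * \<phi>' z2 < 0" using z2 pos ends by linarith
    then show ?thesis using xq by (simp add: mult_less_0_iff)
  qed
  moreover have "\<phi>' z1 \<le> \<phi>' z2"
    using z1 z2 px xq by (intro mono_onD[OF mono]) auto
  ultimately show False by simp
qed

section \<open>Borel measures on the line\<close>

lemma closed_gap_around:
  fixes C :: "real set"
  assumes "closed C" "a \<in> C" "b \<in> C" "x \<in> {a..b}" "x \<notin> C"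
  obtains p q where "p \<in> C" "q \<in> C" "p < x" "x < q" "\<And>y. y \<in> {p<..<q} \<Longrightarrow> y \<notin> C"
proof -
  define P Q where "P = C \<inter> {..x}" and "Q = C \<inter> {x..}"
  have "P \<noteq> {}" "Q \<noteq> {}" "closed P" "closed Q" "bdd_above P" "bdd_below Q"
    using assms by (auto simp: P_def Q_def intro: closed_Int)
  then have "Sup P \<in> P" "Inf Q \<in> Q"
    by (auto intro: closed_contains_Sup closed_contains_Inf)
  moreover have "y \<le> Sup P" if "y \<in> P" for y
    using that \<open>bdd_above P\<close> by (rule cSup_upper)
  moreover have "Inf Q \<le> y" if "y \<in> Q" for y
    using that \<open>bdd_below Q\<close> by (rule cInf_lower)
  ultimately show ?thesis
    using assms(5) by (intro that[of "Sup P" "Inf Q"]) (force simp: P_def Q_def)+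
qed

lemma Ioo_eq_UN_shrinking_Ioo:
  fixes a b :: real
  assumes "a < b"
  shows "{a<..<b} = (\<Union>n. {a + (b - a) / (real n + 3)<..<b - (b - a) / (real n + 3)})"
proof (intro equalityI subsetI)
  fix y assume y: "y \<in> {a<..<b}"
  define m where "m = min (y - a) (b - y)"
  have m: "0 < m" "m \<le> y - a" "m \<le> b - y"
    using y by (auto simp: m_def)
  obtain n where "(b - a) / m < real n"
    using reals_Archimedean2 by blast
  then have "b - a < real n * m"
    using m by (simp add: divide_less_eq)
  also have "\<dots> \<le> (real n + 3) * m"
    using m by (intro mult_right_mono) auto
  finally have "(b - a) / (real n + 3) < m"
    by (simp add: divide_less_eq mult.commute)
  then have "y \<in> {a + (b - a) / (real n + 3)<..<b - (b - a) / (real n + 3)}"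
    using m by auto
  then show "y \<in> (\<Union>n. {a + (b - a) / (real n + 3)<..<b - (b - a) / (real n + 3)})"
    by blast
next
  fix y assume "y \<in> (\<Union>n. {a + (b - a) / (real n + 3)<..<b - (b - a) / (real n + 3)})"
  then obtain n where "y \<in> {a + (b - a) / (real n + 3)<..<b - (b - a) / (real n + 3)}" by blast
  moreover have "0 < (b - a) / (real n + 3)" using assms by simp
  ultimately show "y \<in> {a<..<b}" by auto
qed

lemma emeasure_eq_on_Ioc_if_eq_on_subintervals:
  fixes M N :: "real measure"
  assumes sets: "sets M = sets borel" "sets N = sets borel"
    and eq: "\<And>x. c \<le> x \<Longrightarrow> x \<le> d \<Longrightarrow> emeasure M {x<..d} = emeasure N {x<..d}"
    and finite: "\<And>x. c \<le> x \<Longrightarrow> x \<le> d \<Longrightarrow> emeasure M {x<..d} < \<infinity>"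
    and X: "X \<in> sets borel"
  shows "emeasure M ({c<..d} \<inter> X) = emeasure N ({c<..d} \<inter> X)"
proof -
  have restr: "emeasure (density K (indicator {c<..d})) Y = emeasure K ({c<..d} \<inter> Y)"
    if "sets K = sets borel" "Y \<in> sets borel" for K :: "real measure" and Y
    using that by (intro emeasure_restricted) auto
  have ray: "{c<..d} \<inter> {x<..} = (if max c x \<le> d then {max c x<..d} else {})" for x
    by auto
  have "density M (indicator {c<..d}) = density N (indicator {c<..d})"
  proof (rule measure_eqI_lessThan)
    fix x
    show "emeasure (density M (indicator {c<..d})) {x<..} < \<infinity>"
      using finite[of "max c x"] by (simp add: restr[OF sets(1)] ray)
    show "emeasure (density M (indicator {c<..d})) {x<..}
        = emeasure (density N (indicator {c<..d})) {x<..}"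
      using eq[of "max c x"] by (simp add: restr[OF sets(1)] restr[OF sets(2)] ray)
  qed (use sets in auto)
  then show ?thesis
    using restr[OF sets(1) X] restr[OF sets(2) X] by simp
qed

lemma emeasure_eq_on_Ioo_if_eq_on_Ioc:
  fixes M N :: "real measure"
  assumes sets: "sets M = sets borel" "sets N = sets borel"
    and Ioc_eq: "\<And>c d. a < c \<Longrightarrow> c \<le> d \<Longrightarrow> d < b \<Longrightarrow> emeasure M {c<..d} = emeasure N {c<..d}"
    and Ioc_finite: "\<And>c d. a < c \<Longrightarrow> c \<le> d \<Longrightarrow> d < b \<Longrightarrow> emeasure M {c<..d} < \<infinity>"
    and ab: "a < b" and A: "A \<in> sets borel" "A \<subseteq> {a<..<b}"
  shows "emeasure M A = emeasure N A"
proof -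
  define e where "e n = (b - a) / (real n + 3)" for n
  have e_mono: "e n \<le> e m" if "m \<le> n" for m n
    unfolding e_def using ab that by (intro divide_left_mono) auto
  have e: "0 < e n" "a < a + e n" "a + e n \<le> b - e n" "b - e n < b" for n
  proof -
    show "0 < e n" using ab by (simp add: e_def)
    moreover have "e n \<le> (b - a) / 3"
      using e_mono[of 0 n] by (simp add: e_def)
    ultimately show "a < a + e n" "a + e n \<le> b - e n" "b - e n < b"
      by auto
  qed
  define B where "B n = {a + e n<..b - e n} \<inter> A" for n
  have "emeasure M (B n) = emeasure N (B n)" for n
    unfolding B_def using e[of n] A(1)
    by (intro emeasure_eq_on_Ioc_if_eq_on_subintervals sets Ioc_eq Ioc_finite) auto
  moreover have "incseq B"
    unfolding incseq_def
  proof (intro allI impI subsetI)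
    fix m n y assume "m \<le> n" "y \<in> B m"
    with e_mono[OF \<open>m \<le> n\<close>] show "y \<in> B n"
      by (auto simp: B_def)
  qed
  moreover have "(\<Union>n. B n) = A"
  proof
    show "A \<subseteq> (\<Union>n. B n)"
    proof
      fix y assume "y \<in> A"
      then obtain n where "y \<in> {a + e n<..<b - e n}"
        using A Ioo_eq_UN_shrinking_Ioo[OF ab] unfolding e_def by blast
      then show "y \<in> (\<Union>n. B n)"
        using \<open>y \<in> A\<close> unfolding B_def by auto
    qed
  qed (auto simp: B_def)
  moreover have "range B \<subseteq> sets M" "range B \<subseteq> sets N"
    using A sets unfolding B_def by auto
  ultimately show ?thesis
    using SUP_emeasure_incseq[of B M] SUP_emeasure_incseq[of B N] by simp
qed

section \<open>Limits of endemic equilibria as $d_I \to 0$\<close>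

locale endemic_limit =
  fixes L dS \<Lambda> \<rho>1 \<rho>2 :: real
    and \<beta> \<eta> h h1 h2 Shat :: "real \<Rightarrow> real"
    and dI :: "nat \<Rightarrow> real"
    and S S1 S2 I I1 I2 :: "nat \<Rightarrow> real \<Rightarrow> real"
    and \<mu> :: "real measure"
  assumes L_pos: "0 < L" and dS_pos: "0 < dS"
    and \<beta>_cont: "continuous_on {0..L} \<beta>" and \<eta>_cont: "continuous_on {0..L} \<eta>"
    and \<beta>_pos: "\<And>x. x \<in> {0..L} \<Longrightarrow> 0 < \<beta> x" and \<eta>_pos: "\<And>x. x \<in> {0..L} \<Longrightarrow> 0 < \<eta> x"
    and h_less_\<Lambda>: "\<And>x. x \<in> {0..L} \<Longrightarrow> h x < \<Lambda>"
    and dI_pos: "\<And>n. 0 < dI n" and dI_lim: "dI \<longlonglongrightarrow> 0"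
    and S_C2: "\<And>n. C2_with {0..L} (S n) (S1 n) (S2 n)"
    and I_C2: "\<And>n. C2_with {0..L} (I n) (I1 n) (I2 n)"
    and I_pos: "\<And>n x. x \<in> {0..L} \<Longrightarrow> 0 < I n x"
    and I_eq: "\<And>n x. x \<in> {0<..<L} \<Longrightarrow> dI n * I2 n x = \<beta> x * (h x - S n x) * I n x"
    and SI_eq: "\<And>n x. x \<in> {0<..<L} \<Longrightarrow> dS * S2 n x + dI n * I2 n x = S n x - \<Lambda> + \<eta> x * I n x"
    and S_Neumann: "\<And>n. S1 n 0 = 0" "\<And>n. S1 n L = 0"
    and I_Neumann: "\<And>n. I1 n 0 = 0" "\<And>n. I1 n L = 0"
    and S_unif: "uniform_limit {0..L} S Shat sequentially"
    and \<mu>_sets: "sets \<mu> = sets (restrict_space borel {0..L})"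
    and \<mu>_finite: "finite_measure \<mu>"
    and I_weak: "\<And>\<zeta>. continuous_on {0..L} \<zeta> \<Longrightarrow>
      (\<lambda>n. integral {0..L} (\<lambda>x. I n x * \<zeta> x)) \<longlonglongrightarrow> integral\<^sup>L \<mu> \<zeta>"
    and h_C2: "C2_with {0..L} h h1 h2"
    and Theta: "{x\<in>{0..L}. h x = Inf (h ` {0..L})} = {\<rho>1..\<rho>2}"
    and rho: "0 < \<rho>1" "\<rho>1 < \<rho>2" "\<rho>2 < L"
    and h1_mono: "mono_on ({0..\<rho>1} \<union> {\<rho>2..L}) h1"
begin

lemma continuous_S: "continuous_on {0..L} (S n)"
  and continuous_I: "continuous_on {0..L} (I n)" "continuous_on {0..L} (I2 n)"
  and continuous_h: "continuous_on {0..L} h" "continuous_on {0..L} h1" "continuous_on {0..L} h2"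
  using C2_with_continuous_on[OF S_C2] C2_with_continuous_on[OF I_C2] C2_with_continuous_on[OF h_C2]
  by auto

lemma continuous_Shat: "continuous_on {0..L} Shat"
  using uniform_limit_theorem[OF _ S_unif] continuous_S by auto

lemma I_eq_Icc: "x \<in> {0..L} \<Longrightarrow> dI n * I2 n x = \<beta> x * (h x - S n x) * I n x"
  by (rule continuous_on_Icc_eq_if_eq_on_Ioo[OF L_pos _ _ I_eq])
    (auto intro!: continuous_intros continuous_I continuous_S continuous_h \<beta>_cont)

lemma SI_eq_Icc: "x \<in> {0..L} \<Longrightarrow> dS * S2 n x + dI n * I2 n x = S n x - \<Lambda> + \<eta> x * I n x"
  by (rule continuous_on_Icc_eq_if_eq_on_Ioo[OF L_pos _ _ SI_eq])
    (auto intro!: continuous_intros continuous_I continuous_S \<eta>_cont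
      C2_with_continuous_on(3)[OF S_C2])

lemma integrable_on_subinterval:
  fixes g :: "real \<Rightarrow> real"
  assumes "continuous_on {0..L} g" "{a..b} \<subseteq> {0..L}"
  shows "g integrable_on {a..b}"
  using integrable_continuous_interval[OF continuous_on_subset[OF assms]] .

lemma I_integral_bounded:
  obtains B where "\<And>n. integral {0..L} (I n) \<le> B"
proof -
  have "convergent (\<lambda>n. integral {0..L} (I n))"
    using I_weak[of "\<lambda>_. 1"] by (auto simp: convergent_def)
  then have "Bseq (\<lambda>n. integral {0..L} (I n))"
    by (rule convergent_imp_Bseq)
  then obtain B where B: "\<And>n. norm (integral {0..L} (I n)) \<le> B"
    by (auto simp: Bseq_def)
  have "integral {0..L} (I n) \<le> B" for n
    using B[of n] by (simp add: abs_le_iff)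
  then show ?thesis by (rule that)
qed

lemma integral_I_nonneg: "0 \<le> integral {0..L} (I n)"
  using integral_nonneg[OF integrable_continuous_interval[OF continuous_I(1)]] I_pos
  by (simp add: less_imp_le)

lemma eventually_abs_reaction_bound:
  obtains C where "\<forall>\<^sub>F n in sequentially. \<forall>x\<in>{0..L}. \<bar>\<beta> x * (h x - S n x)\<bar> \<le> C"
proof -
  have "continuous_on {0..L} (\<lambda>x. \<beta> x * (\<bar>Shat x - h x\<bar> + 1))"
    by (intro continuous_intros \<beta>_cont continuous_Shat continuous_h)
  then obtain M where "\<And>x. x \<in> {0..L} \<Longrightarrow> \<bar>\<beta> x * (\<bar>Shat x - h x\<bar> + 1)\<bar> \<le> M"
    using continuous_on_Icc_abs_bound by blast
  then have M: "\<bar>\<beta> x\<bar> * (\<bar>Shat x - h x\<bar> + 1) \<le> M" if "x \<in> {0..L}" for x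
    using that by (simp add: abs_mult)
  have "\<forall>\<^sub>F n in sequentially. \<forall>x\<in>{0..L}. dist (S n x) (Shat x) < 1"
    using uniform_limitD[OF S_unif, of 1] by simp
  then have "\<forall>\<^sub>F n in sequentially. \<forall>x\<in>{0..L}. \<bar>\<beta> x * (h x - S n x)\<bar> \<le> M"
  proof (rule eventually_mono, intro ballI)
    fix n x assume close: "\<forall>x\<in>{0..L}. dist (S n x) (Shat x) < 1" and x: "x \<in> {0..L}"
    have "\<bar>S n x - Shat x\<bar> < 1"
      using close x by (auto simp: dist_real_def)
    then have "\<bar>h x - S n x\<bar> \<le> \<bar>Shat x - h x\<bar> + 1"
      by (auto simp: abs_if split: if_splits)
    then have "\<bar>\<beta> x\<bar> * \<bar>h x - S n x\<bar> \<le> \<bar>\<beta> x\<bar> * (\<bar>Shat x - h x\<bar> + 1)"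
      by (intro mult_left_mono) auto
    then show "\<bar>\<beta> x * (h x - S n x)\<bar> \<le> M"
      using M[OF x] by (simp add: abs_mult)
  qed
  then show ?thesis by (rule that)
qed

lemma abs_dI_I1_le:
  assumes C: "\<And>x. x \<in> {0..L} \<Longrightarrow> \<bar>\<beta> x * (h x - S n x)\<bar> \<le> C" and t: "t \<in> {0..L}"
  shows "\<bar>dI n * I1 n t\<bar> \<le> C * integral {0..L} (I n)"
proof -
  have sub: "{0..t} \<subseteq> {0..L}" using t by auto
  have C_nonneg: "0 \<le> C"
    using C[of 0] L_pos abs_ge_zero[of "\<beta> 0 * (h 0 - S n 0)"] by force
  have "((\<lambda>x. dI n * I2 n x) has_integral dI n * I1 n t - dI n * I1 n 0) {0..t}"
  proof (rule fundamental_theorem_of_calculus)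
    fix x assume "x \<in> {0..t}"
    then have "(I1 n has_real_derivative I2 n x) (at x within {0..t})"
      using C2_with_subset[OF I_C2 sub] unfolding C2_with_def by blast
    then show "((\<lambda>x. dI n * I1 n x) has_vector_derivative dI n * I2 n x) (at x within {0..t})"
      by (simp add: DERIV_cmult has_real_derivative_iff_has_vector_derivative[symmetric])
  qed (use t in auto)
  then have "((\<lambda>x. dI n * I2 n x) has_integral dI n * I1 n t) {0..t}"
    using I_Neumann(1)[of n] by simp
  then have "dI n * I1 n t = integral {0..t} (\<lambda>x. dI n * I2 n x)"
    by (rule integral_unique[symmetric])
  also have "\<dots> = integral {0..t} (\<lambda>x. \<beta> x * (h x - S n x) * I n x)"
    using sub by (intro integral_cong I_eq_Icc) auto
  finally have "\<bar>dI n * I1 n t\<bar> = \<bar>integral {0..t} (\<lambda>x. \<beta> x * (h x - S n x) * I n x)\<bar>"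
    by simp
  also have "\<dots> \<le> integral {0..t} (\<lambda>x. C * I n x)"
    unfolding real_norm_def[symmetric]
  proof (rule Henstock_Kurzweil_Integration.integral_norm_bound_integral)
    show "(\<lambda>x. \<beta> x * (h x - S n x) * I n x) integrable_on {0..t}"
      by (rule integrable_on_subinterval[OF _ sub])
        (intro continuous_intros \<beta>_cont continuous_h continuous_S continuous_I)
    show "(\<lambda>x. C * I n x) integrable_on {0..t}"
      by (rule integrable_on_subinterval[OF _ sub]) (intro continuous_intros continuous_I)
    fix x assume "x \<in> {0..t}"
    then have "x \<in> {0..L}" using sub by auto
    then show "norm (\<beta> x * (h x - S n x) * I n x) \<le> C * I n x"
      using C I_pos[of x n] by (auto simp: abs_mult intro: mult_right_mono)
  qed
  also have "\<dots> = C * integral {0..t} (I n)"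
    by simp
  also have "\<dots> \<le> C * integral {0..L} (I n)"
    using sub I_pos[of _ n]
    by (intro mult_left_mono[OF _ C_nonneg] integral_subset_le[OF sub]
        integrable_on_subinterval[OF continuous_I(1)]) (auto intro: less_imp_le)
  finally show ?thesis .
qed

lemma eventually_dI_I1_bound:
  obtains K where "\<forall>\<^sub>F n in sequentially. \<forall>t\<in>{0..L}. \<bar>dI n * I1 n t\<bar> \<le> K"
proof -
  obtain B where B: "\<And>n. integral {0..L} (I n) \<le> B"
    using I_integral_bounded by blast
  obtain C where C: "\<forall>\<^sub>F n in sequentially. \<forall>x\<in>{0..L}. \<bar>\<beta> x * (h x - S n x)\<bar> \<le> C"
    using eventually_abs_reaction_bound by blast
  have "\<forall>\<^sub>F n in sequentially. \<forall>t\<in>{0..L}. \<bar>dI n * I1 n t\<bar> \<le> C * B"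
  proof (rule eventually_mono[OF C], intro ballI)
    fix n t assume Cn: "\<forall>x\<in>{0..L}. \<bar>\<beta> x * (h x - S n x)\<bar> \<le> C" and t: "t \<in> {0..L}"
    have "0 \<le> C"
      using Cn L_pos abs_ge_zero[of "\<beta> 0 * (h 0 - S n 0)"] by force
    then show "\<bar>dI n * I1 n t\<bar> \<le> C * B"
      using abs_dI_I1_le[OF _ t, of n C] Cn B[of n] order_trans mult_left_mono by blast
  qed
  then show ?thesis by (rule that)
qed

lemma dI_I_tendsto_0:
  assumes x: "x \<in> {0..L}"
  shows "(\<lambda>n. dI n * I n x) \<longlonglongrightarrow> 0"
proof -
  obtain K where K: "\<forall>\<^sub>F n in sequentially. \<forall>t\<in>{0..L}. \<bar>dI n * I1 n t\<bar> \<le> K"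
    using eventually_dI_I1_bound by blast
  have lipschitz: "\<forall>\<^sub>F n in sequentially. K-lipschitz_on {0..L} (\<lambda>y. dI n * I n y)"
  proof (rule eventually_mono[OF K])
    fix n assume Kn: "\<forall>t\<in>{0..L}. \<bar>dI n * I1 n t\<bar> \<le> K"
    have "((\<lambda>y. dI n * I n y) has_real_derivative dI n * I1 n t) (at t within {0..L})"
      if "t \<in> {0..L}" for t
      using I_C2[of n] that unfolding C2_with_def by (auto intro: DERIV_cmult)
    then have "norm (dI n * I n y - dI n * I n z) \<le> K * norm (y - z)"
      if "y \<in> {0..L}" "z \<in> {0..L}" for y z
      using Kn that by (intro field_differentiable_bound[OF convex_real_interval(5)]) auto
    moreover have "0 \<le> K"
      using Kn L_pos abs_ge_zero[of "dI n * I1 n 0"] by force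
    ultimately show "K-lipschitz_on {0..L} (\<lambda>y. dI n * I n y)"
      by (intro lipschitz_onI) (auto simp: dist_norm)
  qed
  obtain B where B: "\<And>n. integral {0..L} (I n) \<le> B"
    using I_integral_bounded by blast
  have lim_bound: "(\<lambda>n. dI n * B) \<longlonglongrightarrow> 0"
    using tendsto_mult_right[OF dI_lim, of B] by simp
  have bounds: "0 \<le> integral {0..L} (\<lambda>y. dI n * I n y)"
    "integral {0..L} (\<lambda>y. dI n * I n y) \<le> dI n * B" for n
    using dI_pos[of n] integral_I_nonneg[of n] B[of n] by (simp_all add: mult_left_mono)
  have "(\<lambda>n. integral {0..L} (\<lambda>y. dI n * I n y)) \<longlonglongrightarrow> 0"
    by (rule tendsto_sandwich[OF always_eventually always_eventually tendsto_const lim_bound])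
      (use bounds in auto)
  moreover have "0 \<le> dI n * I n y" if "y \<in> {0..L}" for n y
    using dI_pos[of n] I_pos[OF that, of n] by simp
  moreover have "continuous_on {0..L} (\<lambda>y. dI n * I n y)" for n
    by (intro continuous_intros continuous_I)
  ultimately show ?thesis
    using tendsto_zero_if_lipschitz_and_integral_tendsto_zero[OF L_pos x _ _ lipschitz] by simp
qed

lemma integral_times_S_tendsto:
  assumes k: "continuous_on {0..L} k"
  shows "(\<lambda>n. integral {0..L} (\<lambda>s. k s * (S n s - \<Lambda>))) \<longlonglongrightarrow> integral {0..L} (\<lambda>s. k s * (Shat s - \<Lambda>))"
proof -
  have bounded: "bounded (f ` {0..L})" if "continuous_on {0..L} f" for f :: "real \<Rightarrow> real"
    using compact_imp_bounded[OF compact_continuous_image[OF that compact_Icc]] .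
  have "uniform_limit {0..L} (\<lambda>n s. S n s - \<Lambda>) (\<lambda>s. Shat s - \<Lambda>) sequentially"
    using uniform_limit_minus[OF S_unif uniform_limit_const] .
  moreover have "continuous_on {0..L} (\<lambda>s. Shat s - \<Lambda>)"
    by (intro continuous_intros continuous_Shat)
  ultimately have "uniform_limit {0..L} (\<lambda>n s. k s * (S n s - \<Lambda>)) (\<lambda>s. k s * (Shat s - \<Lambda>)) sequentially"
    using uniform_lim_mult[OF uniform_limit_const _ bounded[OF k] bounded] by blast
  then obtain J J' where J: "\<And>n. ((\<lambda>s. k s * (S n s - \<Lambda>)) has_integral J n) {0..L}"
    and J': "((\<lambda>s. k s * (Shat s - \<Lambda>)) has_integral J') {0..L}" and "J \<longlonglongrightarrow> J'"
    by (rule uniform_limit_integral) (auto intro!: continuous_intros k continuous_S)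
  moreover have "integral {0..L} (\<lambda>s. k s * (S n s - \<Lambda>)) = J n" for n
    using J by (rule integral_unique)
  ultimately show ?thesis
    using integral_unique[OF J'] by simp
qed

lemma integral_weighted_S2_I2_tendsto:
  assumes k: "continuous_on {0..L} k"
  shows "(\<lambda>n. integral {0..L} (\<lambda>s. k s * (dS * S2 n s + dI n * I2 n s)))
    \<longlonglongrightarrow> integral {0..L} (\<lambda>s. k s * (Shat s - \<Lambda>)) + integral\<^sup>L \<mu> (\<lambda>s. k s * \<eta> s)"
proof -
  have "integral {0..L} (\<lambda>s. k s * (dS * S2 n s + dI n * I2 n s))
      = integral {0..L} (\<lambda>s. k s * (S n s - \<Lambda>)) + integral {0..L} (\<lambda>s. I n s * (k s * \<eta> s))"
    for n
  proof -
    have "integral {0..L} (\<lambda>s. k s * (dS * S2 n s + dI n * I2 n s))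
        = integral {0..L} (\<lambda>s. k s * (S n s - \<Lambda>) + I n s * (k s * \<eta> s))"
      by (intro integral_cong) (simp add: SI_eq_Icc algebra_simps)
    also have "\<dots> = integral {0..L} (\<lambda>s. k s * (S n s - \<Lambda>)) + integral {0..L} (\<lambda>s. I n s * (k s * \<eta> s))"
      by (intro integral_add integrable_continuous_interval continuous_intros k continuous_S
          continuous_I \<eta>_cont)
    finally show ?thesis .
  qed
  moreover have "(\<lambda>n. integral {0..L} (\<lambda>s. I n s * (k s * \<eta> s))) \<longlonglongrightarrow> integral\<^sup>L \<mu> (\<lambda>s. k s * \<eta> s)"
    by (intro I_weak continuous_intros k \<eta>_cont)
  ultimately show ?thesis
    using tendsto_add[OF integral_times_S_tendsto[OF k]] by simp
qed

definition ramp_left_\<mu> :: "real \<Rightarrow> real" where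
  "ramp_left_\<mu> x = integral\<^sup>L \<mu> (\<lambda>s. max (x - s) 0 * \<eta> s)"

definition ramp_right_\<mu> :: "real \<Rightarrow> real" where
  "ramp_right_\<mu> x = integral\<^sup>L \<mu> (\<lambda>s. max (s - x) 0 * \<eta> s)"

lemma dS_S_plus_dI_I_tendsto:
  assumes x: "x \<in> {0..L}"
  shows "(\<lambda>n. dS * S n x + dI n * I n x) \<longlonglongrightarrow> dS * Shat x"
  using tendsto_add[OF tendsto_mult_left[OF tendsto_uniform_limitI[OF S_unif x]] dI_I_tendsto_0[OF x]]
  by simp

text \<open>Adding the two equations, $d_S S_n + d_{I,n} I_n$ has second derivative
  $S_n - \Lambda + \eta I_n$; its Neumann representation passes to the limit, the $I_n$-part
  converging to the $\mu$-ramps.\<close>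

lemma Shat_ramp_representation:
  assumes x: "x \<in> {0..L}"
  shows "dS * Shat x = dS * Shat 0 + ramp_left 0 L (\<lambda>s. Shat s - \<Lambda>) x + ramp_left_\<mu> x"
    and "dS * Shat x = dS * Shat L + ramp_right 0 L (\<lambda>s. Shat s - \<Lambda>) x + ramp_right_\<mu> x"
proof -
  have ends: "0 \<in> {0..L}" "L \<in> {0..L}" using L_pos by auto
  define F where "F n y = dS * S n y + dI n * I n y" for n y
  define F2 where "F2 n y = dS * S2 n y + dI n * I2 n y" for n y
  have "C2_with {0..L} (F n) (\<lambda>y. dS * S1 n y + dI n * I1 n y) (F2 n)" for n
    unfolding F_def F2_def by (rule C2_with_lincomb[OF S_C2 I_C2])
  note repr = Neumann_ramp_representation[OF this _ _ x]
  have F_lim: "(\<lambda>n. F n y) \<longlonglongrightarrow> dS * Shat y" if "y \<in> {0..L}" for y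
    unfolding F_def using dS_S_plus_dI_I_tendsto[OF that] .
  have "(\<lambda>n. F n 0 + ramp_left 0 L (F2 n) x)
      \<longlonglongrightarrow> dS * Shat 0 + (ramp_left 0 L (\<lambda>s. Shat s - \<Lambda>) x + ramp_left_\<mu> x)"
    unfolding ramp_left_def ramp_left_\<mu>_def F2_def
    by (intro tendsto_add F_lim[OF ends(1)] integral_weighted_S2_I2_tendsto continuous_intros)
  moreover have "F n 0 + ramp_left 0 L (F2 n) x = F n x" for n
    using repr(1)[of n] S_Neumann I_Neumann by simp
  ultimately show "dS * Shat x = dS * Shat 0 + ramp_left 0 L (\<lambda>s. Shat s - \<Lambda>) x + ramp_left_\<mu> x"
    using LIMSEQ_unique[OF F_lim[OF x]] by (simp add: add.assoc)
  have "(\<lambda>n. F n L + ramp_right 0 L (F2 n) x)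
      \<longlonglongrightarrow> dS * Shat L + (ramp_right 0 L (\<lambda>s. Shat s - \<Lambda>) x + ramp_right_\<mu> x)"
    unfolding ramp_right_def ramp_right_\<mu>_def F2_def
    by (intro tendsto_add F_lim[OF ends(2)] integral_weighted_S2_I2_tendsto continuous_intros)
  moreover have "F n L + ramp_right 0 L (F2 n) x = F n x" for n
    using repr(2)[of n] S_Neumann I_Neumann by simp
  ultimately show "dS * Shat x = dS * Shat L + ramp_right 0 L (\<lambda>s. Shat s - \<Lambda>) x + ramp_right_\<mu> x"
    using LIMSEQ_unique[OF F_lim[OF x]] by (simp add: add.assoc)
qed

lemma \<beta>_lower_bound:
  obtains b0 where "0 < b0" "\<And>x. x \<in> {0..L} \<Longrightarrow> b0 \<le> \<beta> x"
  using continuous_on_Icc_pos_lower_bound[OF \<beta>_cont \<beta>_pos] by blast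

text \<open>Where $S_n > h$, the equation $d_{I,n} I_n'' = \beta (h - S_n) I_n$ makes $I_n$ a positive
  supersolution with eigenvalue of order $1/d_{I,n}$; no interval of fixed length can carry that.\<close>

lemma dI_lower_bound_if_S_above_h:
  assumes ab: "a < b" "{a..b} \<subseteq> {0..L}"
    and above: "\<And>y. y \<in> {a..b} \<Longrightarrow> q \<le> \<beta> y * (S n y - h y)"
  shows "q \<le> dI n * (pi / (b - a))\<^sup>2"
proof -
  have "q / dI n \<le> (pi / (b - a))\<^sup>2"
  proof (rule positive_supersolution_eigenvalue_le[OF ab(1) C2_with_subset[OF I_C2 ab(2)]])
    fix y assume y: "y \<in> {a..b}"
    then have yL: "y \<in> {0..L}" using ab by auto
    have "q * I n y \<le> \<beta> y * (S n y - h y) * I n y"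
      using above[OF y] less_imp_le[OF I_pos[OF yL]] by (rule mult_right_mono)
    then show "I2 n y \<le> - (q / dI n) * I n y"
      using I_eq_Icc[OF yL, of n] dI_pos[of n] by (simp add: field_simps)
  qed (use I_pos ab in auto)
  then show ?thesis
    using dI_pos[of n] by (simp add: field_simps)
qed

lemma Shat_le_h:
  assumes x0: "x0 \<in> {0..L}"
  shows "Shat x0 \<le> h x0"
proof (rule ccontr)
  assume "\<not> Shat x0 \<le> h x0"
  define \<epsilon> where "\<epsilon> = (Shat x0 - h x0) / 2"
  have \<epsilon>: "0 < \<epsilon>" unfolding \<epsilon>_def using \<open>\<not> _\<close> by simp
  have "continuous_on {0..L} (\<lambda>y. Shat y - h y)"
    by (intro continuous_intros continuous_Shat continuous_h)
  then obtain \<delta> where \<delta>: "0 < \<delta>"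
    and near: "\<And>y. y \<in> {0..L} \<Longrightarrow> dist y x0 < \<delta> \<Longrightarrow> dist (Shat y - h y) (Shat x0 - h x0) < \<epsilon>"
    using x0 \<epsilon> unfolding continuous_on_iff by blast
  define r where "r = min (\<delta> / 2) L"
  define a where "a = min x0 (L - r)"
  have ab: "a < a + r" "{a..a + r} \<subseteq> {0..L}"
    using \<delta> L_pos x0 by (auto simp: r_def a_def)
  obtain b0 where b0: "0 < b0" "\<And>x. x \<in> {0..L} \<Longrightarrow> b0 \<le> \<beta> x"
    using \<beta>_lower_bound by blast
  define q where "q = b0 * (\<epsilon> / 2)"
  have q: "0 < q" unfolding q_def using b0 \<epsilon> by simp
  have "\<forall>\<^sub>F n in sequentially. \<forall>y\<in>{0..L}. dist (S n y) (Shat y) < \<epsilon> / 2"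
    using uniform_limitD[OF S_unif, of "\<epsilon> / 2"] \<epsilon> by simp
  moreover have "(\<lambda>n. dI n * (pi / r)\<^sup>2) \<longlonglongrightarrow> 0"
    using tendsto_mult_right[OF dI_lim, of "(pi / r)\<^sup>2"] by simp
  then have "\<forall>\<^sub>F n in sequentially. dI n * (pi / r)\<^sup>2 < q"
    using q by (rule order_tendstoD(2))
  ultimately obtain n where close: "\<forall>y\<in>{0..L}. dist (S n y) (Shat y) < \<epsilon> / 2"
    and small: "dI n * (pi / r)\<^sup>2 < q"
    using eventually_happens'[OF sequentially_bot eventually_conj] by blast
  have "q \<le> \<beta> y * (S n y - h y)" if y: "y \<in> {a..a + r}" for y
  proof -
    have yL: "y \<in> {0..L}" using y ab by auto
    have "dist (Shat y - h y) (Shat x0 - h x0) < \<epsilon>"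
      using ab y x0 \<delta> by (intro near) (auto simp: a_def r_def dist_real_def)
    moreover have "Shat x0 - h x0 = 2 * \<epsilon>"
      unfolding \<epsilon>_def by simp
    ultimately have "\<epsilon> / 2 \<le> S n y - h y"
      using close yL unfolding dist_real_def abs_less_iff by force
    then show ?thesis
      unfolding q_def using b0(2)[OF yL] \<epsilon> \<beta>_pos[OF yL] by (intro mult_mono) auto
  qed
  then have "q \<le> dI n * (pi / (a + r - a))\<^sup>2"
    by (rule dI_lower_bound_if_S_above_h[OF ab])
  then show False
    using small by simp
qed

lemma space_\<mu>: "space \<mu> = {0..L}"
  using sets_eq_imp_space_eq[OF \<mu>_sets] by simp

lemma sets_\<mu>I: "A \<in> sets borel \<Longrightarrow> A \<subseteq> {0..L} \<Longrightarrow> A \<in> sets \<mu>"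
  unfolding \<mu>_sets by (subst sets_restrict_space_iff) auto

lemma borel_measurable_\<mu>: "continuous_on {0..L} f \<Longrightarrow> f \<in> borel_measurable \<mu>"
  using measurable_cong_sets[OF \<mu>_sets refl] borel_measurable_continuous_on_restrict by blast

lemma integrable_\<mu>:
  fixes f :: "real \<Rightarrow> real"
  assumes "continuous_on {0..L} f"
  shows "integrable \<mu> f"
proof -
  obtain M where "\<And>x. x \<in> {0..L} \<Longrightarrow> \<bar>f x\<bar> \<le> M"
    using continuous_on_Icc_abs_bound[OF assms] by blast
  then have "AE x in \<mu>. norm (f x) \<le> M"
    using space_\<mu> by (intro AE_I2) auto
  then show ?thesis
    using finite_measure.integrable_const_bound[OF \<mu>_finite] borel_measurable_\<mu>[OF assms] by blast
qed

lemma emeasure_pos_set_eq_0: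
  fixes \<zeta> :: "real \<Rightarrow> real"
  assumes cont: "continuous_on {0..L} \<zeta>" and nonneg: "\<And>x. x \<in> {0..L} \<Longrightarrow> 0 \<le> \<zeta> x"
    and lim: "(\<lambda>n. integral {0..L} (\<lambda>x. I n x * \<zeta> x)) \<longlonglongrightarrow> 0"
  shows "emeasure \<mu> {x\<in>{0..L}. 0 < \<zeta> x} = 0"
proof -
  have "integral\<^sup>L \<mu> \<zeta> = 0"
    using LIMSEQ_unique[OF I_weak[OF cont] lim] .
  moreover have "AE x in \<mu>. 0 \<le> \<zeta> x"
    using nonneg space_\<mu> by (intro AE_I2) auto
  ultimately have "AE x in \<mu>. \<zeta> x = 0"
    using integral_nonneg_eq_0_iff_AE[OF integrable_\<mu>[OF cont]] by blast
  moreover have "{x\<in>space \<mu>. \<zeta> x \<noteq> 0} \<in> sets \<mu>"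
    using borel_measurable_\<mu>[OF cont] by measurable
  ultimately have "emeasure \<mu> {x\<in>space \<mu>. \<zeta> x \<noteq> 0} = 0"
    by (simp add: AE_iff_measurable[OF _ refl])
  moreover have "{x\<in>{0..L}. 0 < \<zeta> x} = {x\<in>space \<mu>. \<zeta> x \<noteq> 0}"
    using nonneg space_\<mu> by force
  ultimately show ?thesis by simp
qed

section \<open>The limit measure lives on the contact set\<close>

lemma dI_Green_identity:
  assumes ab: "a \<le> b" "{a..b} \<subseteq> {0..L}" and P: "C2_with {a..b} P P1 P2"
    and ends: "I1 n a * P a = 0" "I1 n b * P b = 0"
  shows "integral {a..b} (\<lambda>x. dI n * I2 n x * P x)
    = dI n * integral {a..b} (\<lambda>x. I n x * P2 x) + dI n * (I n a * P1 a - I n b * P1 b)"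
proof -
  have cP: "continuous_on {a..b} P" "continuous_on {a..b} P2"
    using C2_with_continuous_on[OF P] by auto
  have cI: "continuous_on {a..b} (I n)" "continuous_on {a..b} (I2 n)"
    using continuous_on_subset[OF continuous_I(1) ab(2)] continuous_on_subset[OF continuous_I(2) ab(2)]
    by auto
  have "((\<lambda>x. I2 n x * P x - I n x * P2 x) has_integral I n a * P1 a - I n b * P1 b) {a..b}"
    using Green_identity_has_integral[OF ab(1) C2_with_subset[OF I_C2[of n] ab(2)] P]
    unfolding ends by simp
  then have "integral {a..b} (\<lambda>x. I2 n x * P x - I n x * P2 x) = I n a * P1 a - I n b * P1 b"
    by (rule integral_unique)
  moreover have "(\<lambda>x. I2 n x * P x) integrable_on {a..b}" "(\<lambda>x. I n x * P2 x) integrable_on {a..b}"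
    by (intro integrable_continuous_interval continuous_on_mult cI cP)+
  ultimately have "integral {a..b} (\<lambda>x. I2 n x * P x)
      = integral {a..b} (\<lambda>x. I n x * P2 x) + (I n a * P1 a - I n b * P1 b)"
    by (simp add: integral_diff)
  then show ?thesis
    by (simp add: mult.assoc distrib_left)
qed

text \<open>Testing the $I$-equation against $P \ge 0$ on an interval where $h - S_n \ge q/\beta$:
  two integrations by parts move both derivatives onto $P$, leaving boundary terms
  $d_{I,n} I_n P'$ at the ends, where either $P$ and $P'$ or the flux $I_n'$ vanish.\<close>

lemma weighted_I_integral_bound:
  assumes ab: "a \<le> b" "{a..b} \<subseteq> {0..L}" and P: "C2_with {a..b} P P1 P2"
    and P_nonneg: "\<And>x. x \<in> {a..b} \<Longrightarrow> 0 \<le> P x" and M: "\<And>x. x \<in> {a..b} \<Longrightarrow> \<bar>P2 x\<bar> \<le> M"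
    and left: "a = 0 \<or> P a = 0" and right: "b = L \<or> P b = 0"
    and below: "\<And>x. x \<in> {a..b} \<Longrightarrow> q \<le> \<beta> x * (h x - S n x)"
  shows "q * integral {a..b} (\<lambda>x. I n x * P x)
    \<le> dI n * (M * integral {0..L} (I n)) + dI n * (I n a * P1 a - I n b * P1 b)"
proof -
  have cP: "continuous_on {a..b} P" "continuous_on {a..b} P2"
    using C2_with_continuous_on[OF P] by auto
  have cI: "continuous_on {a..b} (I n)" "continuous_on {a..b} (I2 n)"
    using continuous_on_subset[OF continuous_I(1) ab(2)] continuous_on_subset[OF continuous_I(2) ab(2)]
    by auto
  have "q * (I n x * P x) \<le> dI n * I2 n x * P x" if x: "x \<in> {a..b}" for x
  proof -
    have xL: "x \<in> {0..L}" using x ab by auto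
    have "0 \<le> I n x * P x"
      using I_pos[OF xL, of n] P_nonneg[OF x] by simp
    with below[OF x] have "q * (I n x * P x) \<le> \<beta> x * (h x - S n x) * (I n x * P x)"
      by (rule mult_right_mono)
    then show ?thesis
      using I_eq_Icc[OF xL, of n] by (simp add: mult_ac)
  qed
  then have "q * integral {a..b} (\<lambda>x. I n x * P x) \<le> integral {a..b} (\<lambda>x. dI n * I2 n x * P x)"
    using integral_le[of "\<lambda>x. q * (I n x * P x)" "{a..b}" "\<lambda>x. dI n * I2 n x * P x"]
    by (simp add: integrable_continuous_interval continuous_intros cI cP)
  also have "\<dots> = dI n * integral {a..b} (\<lambda>x. I n x * P2 x) + dI n * (I n a * P1 a - I n b * P1 b)"
    using left right I_Neumann by (intro dI_Green_identity ab P) auto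
  also have "integral {a..b} (\<lambda>x. I n x * P2 x) \<le> M * integral {0..L} (I n)"
  proof -
    have "I n x * P2 x \<le> M * I n x" if x: "x \<in> {a..b}" for x
      using mult_left_mono[OF order_trans[OF abs_ge_self M[OF x]] less_imp_le[OF I_pos[of x n]]] x ab
      by (auto simp: mult.commute)
    then have "integral {a..b} (\<lambda>x. I n x * P2 x) \<le> M * integral {a..b} (I n)"
      using integral_le[of "\<lambda>x. I n x * P2 x" "{a..b}" "\<lambda>x. M * I n x"]
      by (simp add: integrable_continuous_interval continuous_intros cI cP)
    also have "\<dots> \<le> M * integral {0..L} (I n)"
      using ab I_pos[of _ n] M[of a] abs_ge_zero[of "P2 a"]
      by (intro mult_left_mono integral_subset_le integrable_continuous_interval continuous_I cI)
        (auto intro: less_imp_le)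
    finally show ?thesis .
  qed
  then have "dI n * integral {a..b} (\<lambda>x. I n x * P2 x) \<le> dI n * (M * integral {0..L} (I n))"
    using dI_pos[of n] by (simp add: mult_left_mono)
  finally show ?thesis
    by simp
qed

lemma weighted_I_integral_tendsto_0:
  assumes ab: "a < b" "{a..b} \<subseteq> {0..L}" and below: "\<And>x. x \<in> {a..b} \<Longrightarrow> Shat x < h x"
    and P: "C2_with {a..b} P P1 P2" and P_nonneg: "\<And>x. x \<in> {a..b} \<Longrightarrow> 0 \<le> P x"
    and left: "a = 0 \<or> P a = 0" and right: "b = L \<or> P b = 0"
  shows "(\<lambda>n. integral {a..b} (\<lambda>x. I n x * P x)) \<longlonglongrightarrow> 0"
proof -
  have ends: "a \<in> {0..L}" "b \<in> {0..L}" using ab by auto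
  have "continuous_on {a..b} (\<lambda>y. h y - Shat y)"
    using ab by (intro continuous_intros continuous_on_subset[OF continuous_h(1)]
        continuous_on_subset[OF continuous_Shat])
  moreover have "0 < h x - Shat x" if "x \<in> {a..b}" for x
    using below[OF that] by simp
  ultimately obtain \<epsilon> where \<epsilon>: "0 < \<epsilon>" "\<And>x. x \<in> {a..b} \<Longrightarrow> \<epsilon> \<le> h x - Shat x"
    using continuous_on_Icc_pos_lower_bound by blast
  obtain b0 where b0: "0 < b0" "\<And>x. x \<in> {0..L} \<Longrightarrow> b0 \<le> \<beta> x"
    using \<beta>_lower_bound by blast
  define q where "q = b0 * (\<epsilon> / 2)"
  have q: "0 < q" unfolding q_def using b0 \<epsilon> by simp
  obtain M where M: "\<And>x. x \<in> {a..b} \<Longrightarrow> \<bar>P2 x\<bar> \<le> M"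
    using continuous_on_Icc_abs_bound[OF C2_with_continuous_on(3)[OF P]] by blast
  have M_nonneg: "0 \<le> M" using M[of a] ab by force
  obtain B where B: "\<And>n. integral {0..L} (I n) \<le> B"
    using I_integral_bounded by blast
  define bd where "bd n = dI n * I n a * P1 a - dI n * I n b * P1 b" for n
  have bd: "bd \<longlonglongrightarrow> 0"
    unfolding bd_def[abs_def]
    using tendsto_diff[OF tendsto_mult_right[OF dI_I_tendsto_0[OF ends(1)], of "P1 a"]
        tendsto_mult_right[OF dI_I_tendsto_0[OF ends(2)], of "P1 b"]]
    by simp
  have "integral {a..b} (\<lambda>x. I n x * P x) \<le> (dI n * M * B + bd n) / q"
    if close: "\<forall>x\<in>{0..L}. dist (S n x) (Shat x) < \<epsilon> / 2" for n
  proof -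
    have "q \<le> \<beta> x * (h x - S n x)" if x: "x \<in> {a..b}" for x
    proof -
      have xL: "x \<in> {0..L}" using x ab by auto
      have "S n x - Shat x < \<epsilon> / 2"
        using close[rule_format, OF xL] abs_ge_self[of "S n x - Shat x"] by (auto simp: dist_real_def)
      then have "\<epsilon> / 2 \<le> h x - S n x"
        using \<epsilon>(2)[OF x] by linarith
      then show ?thesis
        unfolding q_def using b0(2)[OF xL] \<beta>_pos[OF xL] \<epsilon> by (intro mult_mono) auto
    qed
    then have "q * integral {a..b} (\<lambda>x. I n x * P x)
        \<le> dI n * (M * integral {0..L} (I n)) + bd n"
      using weighted_I_integral_bound[OF less_imp_le[OF ab(1)] ab(2) P P_nonneg M left right]
      by (simp add: bd_def algebra_simps)
    also have "\<dots> \<le> dI n * M * B + bd n"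
      using B[of n] M_nonneg dI_pos[of n] by (simp add: mult_left_mono mult.assoc)
    finally show ?thesis
      using q by (simp add: field_simps)
  qed
  then have upper:
    "\<forall>\<^sub>F n in sequentially. integral {a..b} (\<lambda>x. I n x * P x) \<le> (dI n * M * B + bd n) / q"
    using eventually_mono[OF uniform_limitD[OF S_unif, of "\<epsilon> / 2"]] \<epsilon> by simp
  have lower: "\<forall>\<^sub>F n in sequentially. 0 \<le> integral {a..b} (\<lambda>x. I n x * P x)"
  proof (rule always_eventually, rule allI)
    fix n
    show "0 \<le> integral {a..b} (\<lambda>x. I n x * P x)"
    proof (rule integral_nonneg)
      show "(\<lambda>x. I n x * P x) integrable_on {a..b}"
        using ab C2_with_continuous_on(1)[OF P]
        by (intro integrable_continuous_interval continuous_on_mult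
            continuous_on_subset[OF continuous_I(1)])
      fix x assume x: "x \<in> {a..b}"
      then have "x \<in> {0..L}" using ab by auto
      then show "0 \<le> I n x * P x" using I_pos[of x n] P_nonneg[OF x] by simp
    qed
  qed
  have "(\<lambda>n. dI n * M * B + bd n) \<longlonglongrightarrow> 0 * M * B + 0"
    by (intro tendsto_add tendsto_mult_right dI_lim bd)
  then have "(\<lambda>n. (dI n * M * B + bd n) / q) \<longlonglongrightarrow> 0"
    using tendsto_divide[OF _ tendsto_const, of _ _ _ q] q by fastforce
  then show ?thesis
    using tendsto_sandwich[OF lower upper tendsto_const] by simp
qed

lemma emeasure_eq_0_if_below_h_on_Icc:
  assumes ab: "a < b" and below: "\<And>x. x \<in> {0..L} \<Longrightarrow> a \<le> x \<Longrightarrow> x \<le> b \<Longrightarrow> Shat x < h x"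
  shows "emeasure \<mu> ({0..L} \<inter> {a<..<b}) = 0"
proof (cases "b \<le> 0 \<or> L \<le> a")
  case False
  define a' b' where "a' = max 0 a" and "b' = min L b"
  have ab': "a' < b'" "{a'..b'} \<subseteq> {0..L}"
    using False ab L_pos by (auto simp: a'_def b'_def)
  define P where "P x = ((x - a) * (b - x)) ^ 3" for x
  define \<zeta> where "\<zeta> x = (max 0 ((x - a) * (b - x))) ^ 3" for x
  have \<zeta>_eq: "\<zeta> x = (if x \<in> {a'..b'} then P x else 0)" if x: "x \<in> {0..L}" for x
  proof (cases "x \<in> {a'..b'}")
    case False
    then have "x < a \<or> b < x" using x by (auto simp: a'_def b'_def)
    then have "(x - a) * (b - x) \<le> 0" using ab by (auto simp: mult_le_0_iff)
    then have "max 0 ((x - a) * (b - x)) = 0" by simp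
    then show ?thesis using False by (auto simp: \<zeta>_def)
  qed (auto simp: \<zeta>_def P_def a'_def b'_def)
  have "integral {0..L} (\<lambda>x. I n x * \<zeta> x) = integral {a'..b'} (\<lambda>x. I n x * P x)" for n
  proof -
    have "integral {0..L} (\<lambda>x. I n x * \<zeta> x)
        = integral {0..L} (\<lambda>x. if x \<in> {a'..b'} then I n x * P x else 0)"
      by (intro integral_cong) (simp add: \<zeta>_eq)
    also have "\<dots> = integral ({a'..b'} \<inter> {0..L}) (\<lambda>x. I n x * P x)"
      by (rule integral_restrict_Int)
    also have "{a'..b'} \<inter> {0..L} = {a'..b'}"
      using ab'(2) by auto
    finally show ?thesis .
  qed
  moreover have "(\<lambda>n. integral {a'..b'} (\<lambda>x. I n x * P x)) \<longlonglongrightarrow> 0"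
    unfolding P_def
  proof (rule weighted_I_integral_tendsto_0[OF ab' _ C2_with_cubic_bump])
    show "Shat x < h x" if "x \<in> {a'..b'}" for x
      using that ab'(2) by (intro below) (auto simp: a'_def b'_def)
    show "0 \<le> ((x - a) * (b - x)) ^ 3" if "x \<in> {a'..b'}" for x
      using that by (auto simp: a'_def b'_def)
    show "a' = 0 \<or> ((a' - a) * (b - a')) ^ 3 = 0" "b' = L \<or> ((b' - a) * (b - b')) ^ 3 = 0"
      by (auto simp: a'_def b'_def max_def min_def)
  qed
  ultimately have "emeasure \<mu> {x\<in>{0..L}. 0 < \<zeta> x} = 0"
    by (intro emeasure_pos_set_eq_0) (auto simp: \<zeta>_def intro!: continuous_intros)
  moreover have "{x\<in>{0..L}. 0 < \<zeta> x} = {0..L} \<inter> {a<..<b}"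
    using ab by (auto simp: \<zeta>_def zero_less_mult_iff less_max_iff_disj)
  ultimately show ?thesis by simp
next
  case True
  then have "{0..L} \<inter> {a<..<b} = {}" by auto
  then show ?thesis by simp
qed

lemma emeasure_eq_0_if_below_h:
  assumes below: "\<And>x. x \<in> {0..L} \<Longrightarrow> p < x \<Longrightarrow> x < q \<Longrightarrow> Shat x < h x"
  shows "emeasure \<mu> ({0..L} \<inter> {p<..<q}) = 0"
proof (cases "p < q")
  case True
  define e where "e n = (q - p) / (real n + 3)" for n
  have e: "0 < e n" for n
    using True by (simp add: e_def)
  have "{0..L} \<inter> {p<..<q} = (\<Union>n. {0..L} \<inter> {p + e n<..<q - e n})"
    using Ioo_eq_UN_shrinking_Ioo[OF True] unfolding e_def by auto
  moreover have "emeasure \<mu> (\<Union>n. {0..L} \<inter> {p + e n<..<q - e n}) = 0"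
  proof (rule emeasure_UN_eq_0)
    show "emeasure \<mu> ({0..L} \<inter> {p + e n<..<q - e n}) = 0" for n
    proof (cases "p + e n < q - e n")
      case True
      then show ?thesis
        using e[of n] by (intro emeasure_eq_0_if_below_h_on_Icc below) auto
    qed simp
    show "range (\<lambda>n. {0..L} \<inter> {p + e n<..<q - e n}) \<subseteq> sets \<mu>"
      by (auto intro!: sets_\<mu>I)
  qed
  ultimately show ?thesis by simp
qed simp

section \<open>The contact set\<close>

lemma h_min_at_rho1: "x \<in> {0..L} \<Longrightarrow> h \<rho>1 \<le> h x"
  and h_eq_min_iff: "x \<in> {0..L} \<Longrightarrow> h x = h \<rho>1 \<longleftrightarrow> x \<in> {\<rho>1..\<rho>2}"
proof -
  have "bdd_below (h ` {0..L})"
    using compact_imp_bounded[OF compact_continuous_image[OF continuous_h(1) compact_Icc]]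
    by (rule bounded_imp_bdd_below)
  have "\<rho>1 \<in> {x\<in>{0..L}. h x = Inf (h ` {0..L})}"
    unfolding Theta using rho by simp
  then have min: "h \<rho>1 = Inf (h ` {0..L})" by simp
  show "h \<rho>1 \<le> h x" if "x \<in> {0..L}" for x
    unfolding min using that \<open>bdd_below _\<close> by (intro cInf_lower imageI)
  show "h x = h \<rho>1 \<longleftrightarrow> x \<in> {\<rho>1..\<rho>2}" if "x \<in> {0..L}" for x
    using Theta[THEN eqset_imp_iff, of x] that unfolding min by simp
qed

lemma h1_eq_0_on_Theta:
  assumes x: "x \<in> {\<rho>1..\<rho>2}"
  shows "h1 x = 0"
proof (rule DERIV_local_min)
  have "x \<in> interior {0..L}" using x rho by auto
  then show "(h has_real_derivative h1 x) (at x)"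
    by (rule C2_with_interior(1)[OF h_C2])
  show "0 < min x (L - x)" using x rho by auto
  show "\<forall>y. \<bar>x - y\<bar> < min x (L - x) \<longrightarrow> h x \<le> h y"
  proof (intro allI impI)
    fix y assume "\<bar>x - y\<bar> < min x (L - x)"
    then have "y \<in> {0..L}" by auto
    moreover have "h x = h \<rho>1" using h_eq_min_iff[of x] x rho by auto
    ultimately show "h x \<le> h y" using h_min_at_rho1 by simp
  qed
qed

lemma h1_sign: "x \<in> {0..\<rho>1} \<Longrightarrow> h1 x \<le> 0" "x \<in> {\<rho>2..L} \<Longrightarrow> 0 \<le> h1 x"
  using mono_onD[OF h1_mono, of x \<rho>1] mono_onD[OF h1_mono, of \<rho>2 x] rho
    h1_eq_0_on_Theta[of \<rho>1] h1_eq_0_on_Theta[of \<rho>2]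
  by auto

lemma h1_mono_on: "mono_on {0..L} h1"
proof (rule mono_onI)
  fix x y assume xy: "x \<in> {0..L}" "y \<in> {0..L}" "x \<le> y"
  consider "x \<in> {\<rho>1..\<rho>2}" | "y \<in> {\<rho>1..\<rho>2}" | "x \<notin> {\<rho>1..\<rho>2}" "y \<notin> {\<rho>1..\<rho>2}"
    by blast
  then show "h1 x \<le> h1 y"
  proof cases
    case 1
    then show ?thesis
      using xy h1_eq_0_on_Theta h1_sign(2)[of y] by (cases "y \<le> \<rho>2") auto
  next
    case 2
    then show ?thesis
      using xy h1_eq_0_on_Theta h1_sign(1)[of x] by (cases "\<rho>1 \<le> x") auto
  next
    case 3
    then show ?thesis
      using xy by (intro mono_onD[OF h1_mono]) auto
  qed
qed

lemma h_const_if_h1_eq_0: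
  assumes "{a..b} \<subseteq> {0..L}" "\<And>x. x \<in> {a..b} \<Longrightarrow> h1 x = 0" "x \<in> {a..b}" "y \<in> {a..b}"
  shows "h x = h y"
proof (rule zero_derivative_Icc_eq[OF _ assms(3,4)])
  fix z assume "z \<in> {a..b}"
  then show "(h has_real_derivative 0) (at z within {a..b})"
    using C2_with_subset[OF h_C2 assms(1)] assms(2) unfolding C2_with_def by force
qed

lemma h1_0_neg: "h1 0 < 0"
proof (rule ccontr)
  assume "\<not> h1 0 < 0"
  have "h1 x = 0" if x: "x \<in> {0..\<rho>1}" for x
  proof -
    have "h1 0 \<le> h1 x"
      using x rho by (intro mono_onD[OF h1_mono_on]) auto
    with h1_sign(1)[OF x] \<open>\<not> h1 0 < 0\<close> show "h1 x = 0" by linarith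
  qed
  then have "h 0 = h \<rho>1"
    using rho by (intro h_const_if_h1_eq_0[of 0 \<rho>1]) auto
  then show False
    using h_eq_min_iff[of 0] rho by auto
qed

lemma h1_L_pos: "0 < h1 L"
proof (rule ccontr)
  assume "\<not> 0 < h1 L"
  have "h1 x = 0" if x: "x \<in> {\<rho>2..L}" for x
  proof -
    have "h1 x \<le> h1 L"
      using x rho by (intro mono_onD[OF h1_mono_on]) auto
    with h1_sign(2)[OF x] \<open>\<not> 0 < h1 L\<close> show "h1 x = 0" by linarith
  qed
  then have "h L = h \<rho>2"
    using rho by (intro h_const_if_h1_eq_0[of \<rho>2 L]) auto
  then show False
    using h_eq_min_iff[of L] h_eq_min_iff[of \<rho>2] rho by auto
qed

definition source_primitive :: "real \<Rightarrow> real" where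
  "source_primitive x = integral {0..x} (\<lambda>s. Shat s - \<Lambda>)"

lemma continuous_source: "continuous_on {0..L} (\<lambda>s. Shat s - \<Lambda>)"
  by (intro continuous_intros continuous_Shat)

lemma source_neg:
  assumes "x \<in> {0..L}"
  shows "Shat x - \<Lambda> < 0"
  using Shat_le_h[OF assms] h_less_\<Lambda>[OF assms] by linarith

lemma has_real_derivative_source_primitive:
  "x \<in> {0..L} \<Longrightarrow> (source_primitive has_real_derivative Shat x - \<Lambda>) (at x within {0..L})"
  unfolding source_primitive_def by (rule integral_has_real_derivative[OF continuous_source])

lemma has_real_derivative_source_primitive_at:
  "x \<in> {0<..<L} \<Longrightarrow> (source_primitive has_real_derivative Shat x - \<Lambda>) (at x)"
  using has_real_derivative_source_primitive[of x] at_within_interior[of x "{0..L}"] by auto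

lemma continuous_source_primitive: "continuous_on {0..L} source_primitive"
  by (rule DERIV_continuous_on[OF has_real_derivative_source_primitive])

lemma source_primitive_strict_antimono:
  assumes "0 \<le> x" "x < y" "y \<le> L"
  shows "source_primitive y < source_primitive x"
proof (rule DERIV_neg_imp_decreasing_open[OF assms(2)])
  fix z assume "x < z" "z < y"
  then have "z \<in> {0<..<L}" using assms by auto
  then show "\<exists>D. (source_primitive has_real_derivative D) (at z) \<and> D < 0"
    using has_real_derivative_source_primitive_at source_neg by fastforce
next
  show "continuous_on {x..y} source_primitive"
    using assms by (intro continuous_on_subset[OF continuous_source_primitive]) auto
qed

lemma has_real_derivative_ramp_left_source:
  "x \<in> {0..L} \<Longrightarrow>
    (ramp_left 0 L (\<lambda>s. Shat s - \<Lambda>) has_real_derivative source_primitive x) (at x within {0..L})"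
  unfolding source_primitive_def by (rule has_real_derivative_ramp_left[OF continuous_source])

lemma has_real_derivative_ramp_right_source:
  "x \<in> {0..L} \<Longrightarrow> (ramp_right 0 L (\<lambda>s. Shat s - \<Lambda>) has_real_derivative
    source_primitive x - source_primitive L) (at x within {0..L})"
  unfolding source_primitive_def by (rule has_real_derivative_ramp_right[OF continuous_source])

lemma ramp_\<mu>_nonneg: "0 \<le> ramp_left_\<mu> x" "0 \<le> ramp_right_\<mu> x"
proof -
  have "AE s in \<mu>. 0 \<le> max (x - s) 0 * \<eta> s" "AE s in \<mu>. 0 \<le> max (s - x) 0 * \<eta> s"
    using \<eta>_pos by (auto intro!: AE_I2 simp: space_\<mu> less_imp_le)
  then show "0 \<le> ramp_left_\<mu> x" "0 \<le> ramp_right_\<mu> x"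
    unfolding ramp_left_\<mu>_def ramp_right_\<mu>_def by (auto intro: integral_nonneg_AE)
qed

text \<open>Total mass balance: integrating the limit equation over $[0,L]$ with the Neumann
  conditions.\<close>

lemma mass_balance: "integral\<^sup>L \<mu> \<eta> = integral {0..L} (\<lambda>s. \<Lambda> - Shat s)"
proof -
  have ends: "0 \<in> {0..L}" "L \<in> {0..L}" using L_pos by auto
  have "ramp_left 0 L (\<lambda>s. Shat s - \<Lambda>) L + ramp_right 0 L (\<lambda>s. Shat s - \<Lambda>) 0
      = integral {0..L} (\<lambda>s. (L - s) * (Shat s - \<Lambda>) + s * (Shat s - \<Lambda>))"
    unfolding ramp_left_eq_integral[OF continuous_source ends(2)]
      ramp_right_eq_integral[OF continuous_source ends(1)]
    by (simp add: integral_add integrable_continuous_interval continuous_intros continuous_source)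
  also have "\<dots> = integral {0..L} (\<lambda>s. L * (Shat s - \<Lambda>))"
    by (intro integral_cong) (simp add: algebra_simps)
  also have "\<dots> = L * integral {0..L} (\<lambda>s. Shat s - \<Lambda>)"
    by simp
  finally have lebesgue: "ramp_left 0 L (\<lambda>s. Shat s - \<Lambda>) L + ramp_right 0 L (\<lambda>s. Shat s - \<Lambda>) 0
      = L * integral {0..L} (\<lambda>s. Shat s - \<Lambda>)" .
  have "ramp_left_\<mu> L + ramp_right_\<mu> 0
      = integral\<^sup>L \<mu> (\<lambda>s. max (L - s) 0 * \<eta> s + max (s - 0) 0 * \<eta> s)"
    unfolding ramp_left_\<mu>_def ramp_right_\<mu>_def
    by (rule Bochner_Integration.integral_add[symmetric];
        intro integrable_\<mu> continuous_intros \<eta>_cont)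
  also have "\<dots> = integral\<^sup>L \<mu> (\<lambda>s. L * \<eta> s)"
    by (rule Bochner_Integration.integral_cong[OF refl]) (auto simp: space_\<mu> max_def algebra_simps)
  also have "\<dots> = L * integral\<^sup>L \<mu> \<eta>"
    by simp
  finally have "ramp_left_\<mu> L + ramp_right_\<mu> 0 = L * integral\<^sup>L \<mu> \<eta>" .
  with lebesgue Shat_ramp_representation(1)[OF ends(2)] Shat_ramp_representation(2)[OF ends(1)]
  have "L * integral\<^sup>L \<mu> \<eta> = L * integral {0..L} (\<lambda>s. \<Lambda> - Shat s)"
    by (simp add: integral_diff integrable_continuous_interval continuous_Shat algebra_simps)
  then show ?thesis
    using L_pos by simp
qed

definition contact_set :: "real set" where
  "contact_set = {x\<in>{0..L}. Shat x = h x}"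

definition \<tau>1 :: real where "\<tau>1 = Inf contact_set"
definition \<tau>2 :: real where "\<tau>2 = Sup contact_set"

lemma contact_set_nonempty: "contact_set \<noteq> {}"
proof
  assume "contact_set = {}"
  have "Shat x < h x" if x: "x \<in> {0..L}" for x
  proof -
    have "Shat x \<noteq> h x"
      using x \<open>contact_set = {}\<close> unfolding contact_set_def by blast
    then show ?thesis
      using Shat_le_h[OF x] by simp
  qed
  then have "emeasure \<mu> ({0..L} \<inter> {-1<..<L + 1}) = 0"
    by (intro emeasure_eq_0_if_below_h)
  moreover have "{0..L} \<inter> {-1<..<L + 1} = space \<mu>"
    using space_\<mu> by auto
  ultimately have "space \<mu> \<in> null_sets \<mu>"
    by (auto simp: null_sets_def)
  then have "AE x in \<mu>. \<eta> x = 0"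
    by (rule AE_I') auto
  then have "integral\<^sup>L \<mu> \<eta> = 0"
    by (rule integral_eq_zero_AE)
  moreover have "0 < integral {0..L} (\<lambda>s. \<Lambda> - Shat s)"
  proof -
    have "continuous_on {0..L} (\<lambda>s. \<Lambda> - Shat s)"
      by (intro continuous_intros continuous_Shat)
    moreover have "0 < \<Lambda> - Shat x" if "x \<in> {0..L}" for x
      using source_neg[OF that] by simp
    ultimately obtain g where g: "0 < g" "\<And>x. x \<in> {0..L} \<Longrightarrow> g \<le> \<Lambda> - Shat x"
      using continuous_on_Icc_pos_lower_bound by blast
    have "integral {0..L} (\<lambda>_. g) \<le> integral {0..L} (\<lambda>s. \<Lambda> - Shat s)"
      by (intro integral_le integrable_continuous_interval continuous_intros continuous_Shat g(2))
    then show ?thesis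
      using mult_pos_pos[OF L_pos g(1)] L_pos by simp
  qed
  ultimately show False
    using mass_balance by simp
qed

lemma contact_set_compact: "compact contact_set"
proof -
  have "closed {x\<in>{0..L}. Shat x - h x = 0}"
    by (intro continuous_closed_preimage_constant continuous_intros continuous_Shat continuous_h)
  then show ?thesis
    unfolding compact_eq_bounded_closed contact_set_def by (auto intro: bounded_subset[OF compact_imp_bounded[OF compact_Icc]])
qed

lemma \<tau>_in_contact_set: "\<tau>1 \<in> contact_set" "\<tau>2 \<in> contact_set"
  and \<tau>_bounds: "x \<in> contact_set \<Longrightarrow> \<tau>1 \<le> x" "x \<in> contact_set \<Longrightarrow> x \<le> \<tau>2"
proof -
  have bdd: "bdd_below contact_set" "bdd_above contact_set" and closed: "closed contact_set"
    using compact_imp_bounded[OF contact_set_compact] compact_imp_closed[OF contact_set_compact]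
    by (auto intro: bounded_imp_bdd_below bounded_imp_bdd_above)
  show "\<tau>1 \<in> contact_set" "\<tau>2 \<in> contact_set"
    unfolding \<tau>1_def \<tau>2_def
    by (intro closed_contains_Inf closed_contains_Sup contact_set_nonempty bdd closed)+
  show "x \<in> contact_set \<Longrightarrow> \<tau>1 \<le> x" "x \<in> contact_set \<Longrightarrow> x \<le> \<tau>2"
    unfolding \<tau>1_def \<tau>2_def using bdd by (auto intro: cInf_lower cSup_upper)
qed

lemma \<tau>_range: "0 \<le> \<tau>1" "\<tau>1 \<le> \<tau>2" "\<tau>2 \<le> L"
  and Shat_\<tau>: "Shat \<tau>1 = h \<tau>1" "Shat \<tau>2 = h \<tau>2"
  using \<tau>_in_contact_set \<tau>_bounds unfolding contact_set_def by auto

lemma null_sets_\<mu>I: "A \<in> sets borel \<Longrightarrow> A \<subseteq> {0..L} \<Longrightarrow> emeasure \<mu> A = 0 \<Longrightarrow> A \<in> null_sets \<mu>"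
  by (simp add: null_sets_def sets_\<mu>I)

lemma Shat_less_h_outside:
  "x \<in> {0..<\<tau>1} \<union> {\<tau>2<..L} \<Longrightarrow> Shat x < h x"
  using \<tau>_bounds[of x] Shat_le_h[of x] \<tau>_range
  by (force simp: contact_set_def)

lemma emeasure_outside_contact: "emeasure \<mu> {0..<\<tau>1} = 0" "emeasure \<mu> {\<tau>2<..L} = 0"
proof -
  have "{0..<\<tau>1} = {0..L} \<inter> {-1<..<\<tau>1}" "{\<tau>2<..L} = {0..L} \<inter> {\<tau>2<..<L + 1}"
    using \<tau>_range by auto
  then show "emeasure \<mu> {0..<\<tau>1} = 0" "emeasure \<mu> {\<tau>2<..L} = 0"
    using Shat_less_h_outside by (auto intro!: emeasure_eq_0_if_below_h)
qed

lemma ramp_left_\<mu>_eq_0: "x \<le> \<tau>1 \<Longrightarrow> ramp_left_\<mu> x = 0"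
  unfolding ramp_left_\<mu>_def
proof (rule integral_eq_zero_AE, rule AE_I')
  show "{0..<\<tau>1} \<in> null_sets \<mu>"
    using emeasure_outside_contact(1) \<tau>_range by (intro null_sets_\<mu>I) auto
qed (use space_\<mu> in \<open>auto simp: max_def\<close>)

lemma ramp_right_\<mu>_eq_0: "\<tau>2 \<le> x \<Longrightarrow> ramp_right_\<mu> x = 0"
  unfolding ramp_right_\<mu>_def
proof (rule integral_eq_zero_AE, rule AE_I')
  show "{\<tau>2<..L} \<in> null_sets \<mu>"
    using emeasure_outside_contact(2) \<tau>_range by (intro null_sets_\<mu>I) auto
qed (use space_\<mu> in \<open>auto simp: max_def\<close>)

lemma Shat_eq_left: "x \<in> {0..\<tau>1} \<Longrightarrow> Shat x = Shat 0 + ramp_left 0 L (\<lambda>s. Shat s - \<Lambda>) x / dS"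
  using Shat_ramp_representation(1)[of x] ramp_left_\<mu>_eq_0[of x] \<tau>_range dS_pos
  by (simp add: field_simps)

lemma Shat_eq_right: "x \<in> {\<tau>2..L} \<Longrightarrow> Shat x = Shat L + ramp_right 0 L (\<lambda>s. Shat s - \<Lambda>) x / dS"
  using Shat_ramp_representation(2)[of x] ramp_right_\<mu>_eq_0[of x] \<tau>_range dS_pos
  by (simp add: field_simps)

lemma Shat_lower_bound_left:
  obtains M where "\<And>x. x \<in> {0..L} \<Longrightarrow> Shat 0 - M * x\<^sup>2 \<le> Shat x"
proof -
  obtain M where M: "\<And>x. x \<in> {0..L} \<Longrightarrow> \<bar>Shat x - \<Lambda>\<bar> \<le> M"
    using continuous_on_Icc_abs_bound[OF continuous_source] by blast
  have "Shat 0 - M / dS * x\<^sup>2 \<le> Shat x" if x: "x \<in> {0..L}" for x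
  proof -
    have "- (M * (x - 0)\<^sup>2) \<le> ramp_left 0 L (\<lambda>s. Shat s - \<Lambda>) x"
      using abs_ramp_left_le[OF continuous_source M x] by linarith
    then show ?thesis
      using Shat_ramp_representation(1)[OF x] ramp_\<mu>_nonneg(1)[of x] dS_pos
      by (simp add: field_simps)
  qed
  then show ?thesis by (rule that)
qed

lemma Shat_lower_bound_right:
  obtains M where "\<And>x. x \<in> {0..L} \<Longrightarrow> Shat L - M * (L - x)\<^sup>2 \<le> Shat x"
proof -
  obtain M where M: "\<And>x. x \<in> {0..L} \<Longrightarrow> \<bar>Shat x - \<Lambda>\<bar> \<le> M"
    using continuous_on_Icc_abs_bound[OF continuous_source] by blast
  have "Shat L - M / dS * (L - x)\<^sup>2 \<le> Shat x" if x: "x \<in> {0..L}" for x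
  proof -
    have "- (M * (L - x)\<^sup>2) \<le> ramp_right 0 L (\<lambda>s. Shat s - \<Lambda>) x"
      using abs_ramp_right_le[OF continuous_source M x] by linarith
    then show ?thesis
      using Shat_ramp_representation(2)[OF x] ramp_\<mu>_nonneg(2)[of x] dS_pos
      by (simp add: field_simps)
  qed
  then show ?thesis by (rule that)
qed

lemma h_has_derivative_within:
  "x \<in> T \<Longrightarrow> T \<subseteq> {0..L} \<Longrightarrow> (h has_real_derivative h1 x) (at x within T)"
  using h_C2 unfolding C2_with_def by (blast intro: DERIV_subset)

text \<open>If $\hat S$ touched $h$ at $0$, the quadratic lower bound would force $h'(0) \ge 0$.\<close>

lemma \<tau>1_pos: "0 < \<tau>1"
proof (rule ccontr)
  assume "\<not> 0 < \<tau>1"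
  then have "Shat 0 = h 0"
    using Shat_\<tau>(1) \<tau>_range by simp
  obtain M where M: "\<And>x. x \<in> {0..L} \<Longrightarrow> Shat 0 - M * x\<^sup>2 \<le> Shat x"
    using Shat_lower_bound_left by blast
  have "h 0 - M * (y - 0)\<^sup>2 \<le> h y" if "y \<in> {0..L}" for y
    using M[OF that] Shat_le_h[OF that] \<open>Shat 0 = h 0\<close> by simp
  moreover have "(h has_real_derivative h1 0) (at 0 within {0..L})"
    using L_pos by (intro h_has_derivative_within) auto
  ultimately have "0 \<le> h1 0"
    using deriv_nonneg_at_left_end[OF _ L_pos] by blast
  then show False
    using h1_0_neg by simp
qed

lemma \<tau>2_less_L: "\<tau>2 < L"
proof (rule ccontr)
  assume "\<not> \<tau>2 < L"
  then have "Shat L = h L"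
    using Shat_\<tau>(2) \<tau>_range by simp
  obtain M where M: "\<And>x. x \<in> {0..L} \<Longrightarrow> Shat L - M * (L - x)\<^sup>2 \<le> Shat x"
    using Shat_lower_bound_right by blast
  have "h L - M * (L - y)\<^sup>2 \<le> h y" if "y \<in> {0..L}" for y
    using M[OF that] Shat_le_h[OF that] \<open>Shat L = h L\<close> by simp
  moreover have "(h has_real_derivative h1 L) (at L within {0..L})"
    using L_pos by (intro h_has_derivative_within) auto
  ultimately have "h1 L \<le> 0"
    using deriv_nonpos_at_right_end[OF _ L_pos] by blast
  then show False
    using h1_L_pos by simp
qed

lemma Shat_has_derivative_left:
  assumes x: "x \<in> {0..\<tau>1}"
  shows "(Shat has_real_derivative source_primitive x / dS) (at x within {0..\<tau>1})"
proof -
  have sub: "{0..\<tau>1} \<subseteq> {0..L}" using \<tau>_range by auto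
  have "(ramp_left 0 L (\<lambda>s. Shat s - \<Lambda>) has_real_derivative source_primitive x) (at x within {0..\<tau>1})"
    using has_real_derivative_ramp_left_source x sub by (blast intro: DERIV_subset)
  then have "((\<lambda>y. Shat 0 + ramp_left 0 L (\<lambda>s. Shat s - \<Lambda>) y / dS) has_real_derivative
      0 + source_primitive x / dS) (at x within {0..\<tau>1})"
    by (intro DERIV_add DERIV_const DERIV_cdivide)
  then have "((\<lambda>y. Shat 0 + ramp_left 0 L (\<lambda>s. Shat s - \<Lambda>) y / dS) has_real_derivative
      source_primitive x / dS) (at x within {0..\<tau>1})"
    by simp
  then show ?thesis
  proof (rule has_field_derivative_transform_within[where d = 1, simplified])
    fix y assume "y \<in> {0..\<tau>1}"
    from Shat_eq_left[OF this] show "Shat 0 + ramp_left 0 L (\<lambda>s. Shat s - \<Lambda>) y / dS = Shat y"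
      by (rule sym)
  qed (use x in auto)
qed

lemma Shat_has_derivative_right:
  assumes x: "x \<in> {\<tau>2..L}"
  shows "(Shat has_real_derivative (source_primitive x - source_primitive L) / dS) (at x within {\<tau>2..L})"
proof -
  have sub: "{\<tau>2..L} \<subseteq> {0..L}" using \<tau>_range by auto
  have "(ramp_right 0 L (\<lambda>s. Shat s - \<Lambda>) has_real_derivative source_primitive x - source_primitive L)
      (at x within {\<tau>2..L})"
    using has_real_derivative_ramp_right_source x sub by (blast intro: DERIV_subset)
  then have "((\<lambda>y. Shat L + ramp_right 0 L (\<lambda>s. Shat s - \<Lambda>) y / dS) has_real_derivative
      0 + (source_primitive x - source_primitive L) / dS) (at x within {\<tau>2..L})"
    by (intro DERIV_add DERIV_const DERIV_cdivide)
  then have "((\<lambda>y. Shat L + ramp_right 0 L (\<lambda>s. Shat s - \<Lambda>) y / dS) has_real_derivative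
      (source_primitive x - source_primitive L) / dS) (at x within {\<tau>2..L})"
    by simp
  then show ?thesis
  proof (rule has_field_derivative_transform_within[where d = 1, simplified])
    fix y assume "y \<in> {\<tau>2..L}"
    from Shat_eq_right[OF this] show "Shat L + ramp_right 0 L (\<lambda>s. Shat s - \<Lambda>) y / dS = Shat y"
      by (rule sym)
  qed (use x in auto)
qed

lemma Shat_has_derivative_left_at:
  "x \<in> {0<..<\<tau>1} \<Longrightarrow> (Shat has_real_derivative source_primitive x / dS) (at x)"
  using Shat_has_derivative_left[of x] at_within_interior[of x "{0..\<tau>1}"] by auto

lemma Shat_has_derivative_right_at:
  "x \<in> {\<tau>2<..<L} \<Longrightarrow>
    (Shat has_real_derivative (source_primitive x - source_primitive L) / dS) (at x)"
  using Shat_has_derivative_right[of x] at_within_interior[of x "{\<tau>2..L}"] by auto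

text \<open>At the ends of the contact set $h - \hat S \ge 0$ attains the value $0$, which pins down the
  sign of $h'$ there; monotonicity of $h'$ then places them outside $\Theta_h$.\<close>

lemma \<tau>1_less_\<rho>1: "\<tau>1 < \<rho>1"
proof -
  have "((\<lambda>y. h y - Shat y) has_real_derivative h1 \<tau>1 - source_primitive \<tau>1 / dS)
      (at \<tau>1 within {0..\<tau>1})"
    using \<tau>_range by (intro DERIV_diff h_has_derivative_within Shat_has_derivative_left) auto
  moreover have "h \<tau>1 - Shat \<tau>1 - 0 * (\<tau>1 - y)\<^sup>2 \<le> h y - Shat y" if "y \<in> {0..\<tau>1}" for y
    using Shat_\<tau>(1) Shat_le_h[of y] that \<tau>_range by simp
  ultimately have "h1 \<tau>1 - source_primitive \<tau>1 / dS \<le> 0"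
    by (rule deriv_nonpos_at_right_end[OF _ \<tau>1_pos])
  moreover have "source_primitive \<tau>1 < source_primitive 0"
    using \<tau>1_pos \<tau>_range by (intro source_primitive_strict_antimono) auto
  then have "source_primitive \<tau>1 / dS < 0"
    using dS_pos by (simp add: source_primitive_def divide_neg_pos)
  ultimately have "h1 \<tau>1 < 0"
    by linarith
  then show ?thesis
    using mono_onD[OF h1_mono_on, of \<rho>1 \<tau>1] h1_eq_0_on_Theta[of \<rho>1] rho \<tau>_range
    by (cases "\<rho>1 \<le> \<tau>1") auto
qed

lemma \<rho>2_less_\<tau>2: "\<rho>2 < \<tau>2"
proof -
  have "((\<lambda>y. h y - Shat y) has_real_derivative h1 \<tau>2 - (source_primitive \<tau>2 - source_primitive L) / dS)
      (at \<tau>2 within {\<tau>2..L})"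
    using \<tau>_range by (intro DERIV_diff h_has_derivative_within Shat_has_derivative_right) auto
  moreover have "h \<tau>2 - Shat \<tau>2 - 0 * (y - \<tau>2)\<^sup>2 \<le> h y - Shat y" if "y \<in> {\<tau>2..L}" for y
    using Shat_\<tau>(2) Shat_le_h[of y] that \<tau>_range by simp
  ultimately have "0 \<le> h1 \<tau>2 - (source_primitive \<tau>2 - source_primitive L) / dS"
    by (rule deriv_nonneg_at_left_end[OF _ \<tau>2_less_L])
  moreover have "source_primitive L < source_primitive \<tau>2"
    using \<tau>2_less_L \<tau>_range by (intro source_primitive_strict_antimono) auto
  then have "0 < (source_primitive \<tau>2 - source_primitive L) / dS"
    using dS_pos by simp
  ultimately have "0 < h1 \<tau>2"
    by linarith
  then show ?thesis
    using mono_onD[OF h1_mono_on, of \<tau>2 \<rho>2] h1_eq_0_on_Theta[of \<rho>2] rho \<tau>_range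
    by (cases "\<tau>2 \<le> \<rho>2") auto
qed

section \<open>The limit measure on the contact set\<close>

definition eta_cdf :: "real \<Rightarrow> real" where
  "eta_cdf z = integral\<^sup>L \<mu> (\<lambda>s. \<eta> s * indicator {0..z} s)"

lemma integrable_\<mu>_indicator:
  fixes g :: "real \<Rightarrow> real"
  assumes "continuous_on {0..L} g" "z \<le> L"
  shows "integrable \<mu> (\<lambda>s. g s * indicator {0..z} s)"
  using assms by (intro integrable_real_mult_indicator integrable_\<mu> sets_\<mu>I) auto

lemma ramp_left_\<mu>_affine_on_gap:
  assumes pq: "0 \<le> p" "q \<le> L" and null: "emeasure \<mu> ({0..L} \<inter> {p<..<q}) = 0"
    and y: "y \<in> {p..q}"
  shows "ramp_left_\<mu> y = y * eta_cdf p - integral\<^sup>L \<mu> (\<lambda>s. s * \<eta> s * indicator {0..p} s)"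
proof -
  have int: "integrable \<mu> (\<lambda>s. y * \<eta> s * indicator {0..p} s)"
    "integrable \<mu> (\<lambda>s. s * \<eta> s * indicator {0..p} s)"
    using pq y by (intro integrable_\<mu>_indicator continuous_intros \<eta>_cont; simp)+
  have "{0..L} \<inter> {p<..<q} \<in> null_sets \<mu>"
    using null by (intro null_sets_\<mu>I) auto
  moreover have "{s\<in>space \<mu>. max (y - s) 0 * \<eta> s
      \<noteq> y * \<eta> s * indicator {0..p} s - s * \<eta> s * indicator {0..p} s} \<subseteq> {0..L} \<inter> {p<..<q}"
    using y by (auto simp: space_\<mu> indicator_def max_def algebra_simps)
  ultimately have "AE s in \<mu>. max (y - s) 0 * \<eta> s
      = y * \<eta> s * indicator {0..p} s - s * \<eta> s * indicator {0..p} s"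
    by (rule AE_I')
  moreover have "(\<lambda>s. max (y - s) 0 * \<eta> s) \<in> borel_measurable \<mu>"
    by (intro borel_measurable_\<mu> continuous_intros \<eta>_cont)
  ultimately have "ramp_left_\<mu> y
      = integral\<^sup>L \<mu> (\<lambda>s. y * \<eta> s * indicator {0..p} s - s * \<eta> s * indicator {0..p} s)"
    unfolding ramp_left_\<mu>_def using int by (intro integral_cong_AE) auto
  also have "\<dots> = y * eta_cdf p - integral\<^sup>L \<mu> (\<lambda>s. s * \<eta> s * indicator {0..p} s)"
    using int by (simp add: eta_cdf_def mult.assoc)
  finally show ?thesis .
qed

text \<open>Where $\mu$ vanishes, $\hat S$ solves $d_S \hat S'' = \hat S - \Lambda$ exactly; the constant of
  integration carried by its derivative is the $\eta\mu$-mass to the left.\<close>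

lemma Shat_has_derivative_on_gap:
  assumes pq: "0 \<le> p" "q \<le> L" and null: "emeasure \<mu> ({0..L} \<inter> {p<..<q}) = 0"
    and z: "z \<in> {p<..<q}"
  shows "(Shat has_real_derivative (source_primitive z + eta_cdf p) / dS) (at z)"
proof -
  define B where "B = integral\<^sup>L \<mu> (\<lambda>s. s * \<eta> s * indicator {0..p} s)"
  define f where "f y = Shat 0 + (ramp_left 0 L (\<lambda>s. Shat s - \<Lambda>) y + y * eta_cdf p - B) / dS" for y
  have zL: "z \<in> {0..L}" "z \<in> interior {0..L}" using z pq by auto
  have "((\<lambda>y. ramp_left 0 L (\<lambda>s. Shat s - \<Lambda>) y + y * eta_cdf p - B) has_real_derivative
      source_primitive z + 1 * eta_cdf p - 0) (at z within {0..L})"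
    by (intro DERIV_diff DERIV_add has_real_derivative_ramp_left_source[OF zL(1)]
        DERIV_cmult_right DERIV_ident DERIV_const)
  then have "(f has_real_derivative 0 + (source_primitive z + 1 * eta_cdf p - 0) / dS)
      (at z within {0..L})"
    unfolding f_def by (intro DERIV_add DERIV_const DERIV_cdivide)
  then have "(f has_real_derivative (source_primitive z + eta_cdf p) / dS) (at z)"
    using at_within_interior[OF zL(2)] by simp
  then show ?thesis
  proof (rule has_field_derivative_transform_within_open[OF _ open_greaterThanLessThan z])
    fix y assume y: "y \<in> {p<..<q}"
    then have "ramp_left_\<mu> y = y * eta_cdf p - B"
      unfolding B_def using pq null by (intro ramp_left_\<mu>_affine_on_gap) auto
    then show "f y = Shat y"
      using Shat_ramp_representation(1)[of y] y pq dS_pos by (auto simp: f_def field_simps)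
  qed
qed

text \<open>On a gap of the contact set inside $[\tau_1, \tau_2]$, $h - \hat S$ would have nondecreasing
  derivative ($h'$ is nondecreasing, the source primitive is decreasing), vanish at both ends and be
  positive inside, which is impossible.\<close>

lemma Shat_eq_h_between:
  assumes x: "x \<in> {\<tau>1..\<tau>2}"
  shows "Shat x = h x"
proof (rule ccontr)
  assume ne: "Shat x \<noteq> h x"
  have xL: "x \<in> {0..L}" using x \<tau>_range by auto
  then have "x \<notin> contact_set" using ne by (simp add: contact_set_def)
  obtain p q where pq: "p \<in> contact_set" "q \<in> contact_set" "p < x" "x < q"
    and gap: "\<And>y. y \<in> {p<..<q} \<Longrightarrow> y \<notin> contact_set"
    using closed_gap_around[OF compact_imp_closed[OF contact_set_compact] \<tau>_in_contact_set x
        \<open>x \<notin> contact_set\<close>] by blast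
  have pqL: "0 \<le> p" "q \<le> L" "{p..q} \<subseteq> {0..L}"
    using pq(1,2) by (auto simp: contact_set_def)
  have "emeasure \<mu> ({0..L} \<inter> {p<..<q}) = 0"
    using gap Shat_le_h by (intro emeasure_eq_0_if_below_h) (force simp: contact_set_def)
  note deriv = Shat_has_derivative_on_gap[OF pqL(1,2) this]
  define \<phi>' where "\<phi>' z = h1 z - (source_primitive z + eta_cdf p) / dS" for z
  have "h x - Shat x \<le> 0"
  proof (rule nonpos_if_mono_deriv_and_zero_at_ends[where \<phi> = "\<lambda>y. h y - Shat y" and \<phi>' = \<phi>'])
    show "x \<in> {p..q}" using pq by auto
    show "continuous_on {p..q} (\<lambda>y. h y - Shat y)"
      using pqL by (intro continuous_intros continuous_on_subset[OF continuous_h(1)]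
          continuous_on_subset[OF continuous_Shat])
    show "((\<lambda>y. h y - Shat y) has_real_derivative \<phi>' z) (at z)" if z: "z \<in> {p<..<q}" for z
      unfolding \<phi>'_def using z pqL
      by (intro DERIV_diff C2_with_interior(1)[OF h_C2] deriv) auto
    show "mono_on {p<..<q} \<phi>'"
    proof (rule mono_onI)
      fix y z assume yz: "y \<in> {p<..<q}" "z \<in> {p<..<q}" "y \<le> z"
      have "h1 y \<le> h1 z"
        using yz pqL by (intro mono_onD[OF h1_mono_on]) auto
      moreover have "source_primitive z \<le> source_primitive y"
        using yz pqL source_primitive_strict_antimono[of y z] by (cases "y = z") auto
      then have "(source_primitive z + eta_cdf p) / dS \<le> (source_primitive y + eta_cdf p) / dS"
        using dS_pos by (intro divide_right_mono) auto
      ultimately show "\<phi>' y \<le> \<phi>' z"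
        unfolding \<phi>'_def by linarith
    qed
    show "h p - Shat p = 0" "h q - Shat q = 0"
      using pq(1,2) by (auto simp: contact_set_def)
  qed
  then show False
    using ne Shat_le_h[OF xL] by simp
qed

definition eta_density :: "real \<Rightarrow> real" where
  "eta_density x = \<Lambda> - h x + dS * h2 x"

text \<open>The $\mu$-ramp is convex, and the distribution function of $\eta\mu$ at $z$ is a subgradient
  of it at $z$; where the ramp is differentiable, inside the contact set, the two must agree.\<close>

lemma ramp_left_\<mu>_subgradient:
  assumes z: "z \<le> L"
  shows "ramp_left_\<mu> z + (y - z) * eta_cdf z \<le> ramp_left_\<mu> y"
proof -
  have int: "integrable \<mu> (\<lambda>s. max (x - s) 0 * \<eta> s)" for x
    by (intro integrable_\<mu> continuous_intros \<eta>_cont)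
  have "(y - z) * eta_cdf z = integral\<^sup>L \<mu> (\<lambda>s. (y - z) * \<eta> s * indicator {0..z} s)"
    by (simp add: eta_cdf_def mult.assoc)
  also have "\<dots> \<le> integral\<^sup>L \<mu> (\<lambda>s. max (y - s) 0 * \<eta> s - max (z - s) 0 * \<eta> s)"
  proof (rule integral_mono)
    show "integrable \<mu> (\<lambda>s. (y - z) * \<eta> s * indicator {0..z} s)"
      using z by (intro integrable_\<mu>_indicator continuous_intros \<eta>_cont)
    show "integrable \<mu> (\<lambda>s. max (y - s) 0 * \<eta> s - max (z - s) 0 * \<eta> s)"
      using int by simp
    fix s assume "s \<in> space \<mu>"
    then have s: "0 \<le> s" "0 \<le> \<eta> s"
      using \<eta>_pos[of s] by (auto simp: space_\<mu>)
    show "(y - z) * \<eta> s * indicator {0..z} s \<le> max (y - s) 0 * \<eta> s - max (z - s) 0 * \<eta> s"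
    proof (cases "s \<le> z")
      case True
      then have "(y - s) * \<eta> s \<le> max (y - s) 0 * \<eta> s"
        using s by (intro mult_right_mono) auto
      then show ?thesis
        using True s by (simp add: algebra_simps)
    qed (use s in simp)
  qed
  also have "\<dots> = ramp_left_\<mu> y - ramp_left_\<mu> z"
    unfolding ramp_left_\<mu>_def using int by simp
  finally show ?thesis by simp
qed

lemma eta_cdf_diff:
  assumes "x \<le> y" "y \<le> L"
  shows "eta_cdf y - eta_cdf x = integral\<^sup>L \<mu> (\<lambda>s. \<eta> s * indicator {x<..y} s)"
proof -
  have "eta_cdf y - eta_cdf x
      = integral\<^sup>L \<mu> (\<lambda>s. \<eta> s * indicator {0..y} s - \<eta> s * indicator {0..x} s)"
    unfolding eta_cdf_def using assms
    by (intro Bochner_Integration.integral_diff[symmetric] integrable_\<mu>_indicator \<eta>_cont) auto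
  also have "\<dots> = integral\<^sup>L \<mu> (\<lambda>s. \<eta> s * indicator {x<..y} s)"
    using assms by (intro Bochner_Integration.integral_cong) (auto simp: space_\<mu> indicator_def)
  finally show ?thesis .
qed

lemma eta_cdf_mono:
  assumes "x \<le> y" "y \<le> L"
  shows "eta_cdf x \<le> eta_cdf y"
proof -
  have "0 \<le> integral\<^sup>L \<mu> (\<lambda>s. \<eta> s * indicator {x<..y} s)"
    using \<eta>_pos by (intro integral_nonneg_AE AE_I2) (auto simp: space_\<mu> indicator_def less_imp_le)
  then show ?thesis
    using eta_cdf_diff[OF assms] by simp
qed

lemma eta_cdf_eq_on_contact:
  assumes t: "t \<in> {\<tau>1<..<\<tau>2}"
  shows "eta_cdf t = dS * h1 t - source_primitive t"
proof -
  have ti: "t \<in> interior {0..L}" "t \<in> {0..L}"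
    using t \<tau>1_pos \<tau>2_less_L by auto
  have ramp: "ramp_left_\<mu> y = dS * h y - dS * Shat 0 - ramp_left 0 L (\<lambda>s. Shat s - \<Lambda>) y"
    if "y \<in> {\<tau>1<..<\<tau>2}" for y
    using Shat_ramp_representation(1)[of y] Shat_eq_h_between[of y] that \<tau>_range by auto
  have "((\<lambda>y. dS * h y - dS * Shat 0 - ramp_left 0 L (\<lambda>s. Shat s - \<Lambda>) y)
      has_real_derivative dS * h1 t - 0 - source_primitive t) (at t within {0..L})"
    using ti(2)
    by (intro DERIV_diff DERIV_cmult DERIV_const has_real_derivative_ramp_left_source
        h_has_derivative_within) auto
  then have "((\<lambda>y. dS * h y - dS * Shat 0 - ramp_left 0 L (\<lambda>s. Shat s - \<Lambda>) y)
      has_real_derivative dS * h1 t - source_primitive t) (at t)"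
    unfolding at_within_interior[OF ti(1)] by simp
  then have "(ramp_left_\<mu> has_real_derivative dS * h1 t - source_primitive t) (at t)"
    by (rule has_field_derivative_transform_within_open[OF _ open_greaterThanLessThan t])
      (simp add: ramp)
  then have deriv: "((\<lambda>y. ramp_left_\<mu> y - y * eta_cdf t) has_real_derivative
      dS * h1 t - source_primitive t - 1 * eta_cdf t) (at t)"
    by (intro DERIV_diff DERIV_cmult_right DERIV_ident)
  have "\<forall>y. \<bar>t - y\<bar> < 1 \<longrightarrow> ramp_left_\<mu> t - t * eta_cdf t \<le> ramp_left_\<mu> y - y * eta_cdf t"
    using ramp_left_\<mu>_subgradient[of t] ti(2) by (auto simp: algebra_simps)
  then have "dS * h1 t - source_primitive t - 1 * eta_cdf t = 0"
    by (rule DERIV_local_min[OF deriv zero_less_one])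
  then show ?thesis by simp
qed

lemma has_real_derivative_eta_cdf:
  assumes z: "z \<in> {\<tau>1<..<\<tau>2}"
  shows "(eta_cdf has_real_derivative eta_density z) (at z)"
proof -
  have "z \<in> {0<..<L}" using z \<tau>1_pos \<tau>2_less_L by auto
  have "((\<lambda>t. dS * h1 t - source_primitive t) has_real_derivative dS * h2 z - (Shat z - \<Lambda>)) (at z)"
    using C2_with_interior(2)[OF h_C2] has_real_derivative_source_primitive_at \<open>z \<in> {0<..<L}\<close>
    by (intro DERIV_diff DERIV_cmult) auto
  moreover have "dS * h2 z - (Shat z - \<Lambda>) = eta_density z"
    using Shat_eq_h_between[of z] z by (simp add: eta_density_def)
  ultimately have "((\<lambda>t. dS * h1 t - source_primitive t) has_real_derivative eta_density z) (at z)"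
    by simp
  then show ?thesis
    by (rule has_field_derivative_transform_within_open[OF _ open_greaterThanLessThan z])
      (simp add: eta_cdf_eq_on_contact)
qed

lemma eta_density_nonneg:
  assumes z: "z \<in> {\<tau>1<..<\<tau>2}"
  shows "0 \<le> eta_density z"
proof (rule ccontr)
  assume "\<not> 0 \<le> eta_density z"
  then obtain d where d: "0 < d" "\<And>t. 0 < t \<Longrightarrow> t < d \<Longrightarrow> eta_cdf (z + t) < eta_cdf z"
    using DERIV_neg_dec_right[OF has_real_derivative_eta_cdf[OF z]] by auto
  define t where "t = min (d / 2) ((\<tau>2 - z) / 2)"
  have "t \<le> d / 2" "t \<le> (\<tau>2 - z) / 2"
    unfolding t_def by (rule min.cobounded1, rule min.cobounded2)
  moreover have "0 < t"
    using d z by (simp add: t_def)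
  ultimately have "0 < t" "t < d" "z + t \<le> L"
    using d z \<tau>2_less_L by auto
  then show False
    using d(2)[of t] eta_cdf_mono[of z "z + t"] by simp
qed

lemma eta_integral_Ioc:
  assumes xy: "\<tau>1 < x" "x \<le> y" "y < \<tau>2"
  shows "integral\<^sup>L \<mu> (\<lambda>s. \<eta> s * indicator {x<..y} s) = integral {x..y} eta_density"
proof -
  have "(eta_density has_integral eta_cdf y - eta_cdf x) {x..y}"
  proof (rule fundamental_theorem_of_calculus[OF xy(2)])
    fix t assume "t \<in> {x..y}"
    then have "(eta_cdf has_real_derivative eta_density t) (at t)"
      using xy by (intro has_real_derivative_eta_cdf) auto
    then have "(eta_cdf has_real_derivative eta_density t) (at t within {x..y})"
      by (rule has_field_derivative_at_within)
    then show "(eta_cdf has_vector_derivative eta_density t) (at t within {x..y})"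
      by (simp add: has_real_derivative_iff_has_vector_derivative)
  qed
  then show ?thesis
    using eta_cdf_diff[of x y] xy \<tau>2_less_L by (simp add: integral_unique)
qed

lemma continuous_eta_density: "continuous_on {0..L} eta_density"
  unfolding eta_density_def by (intro continuous_intros continuous_h)

lemma Ioo_\<tau>_subset: "{\<tau>1<..<\<tau>2} \<subseteq> {0..L}" "{\<tau>1..\<tau>2} \<subseteq> {0..L}"
  using \<tau>_range by auto

lemma borel_measurable_indicator_Ioo_\<tau>:
  fixes f :: "real \<Rightarrow> real"
  assumes "continuous_on {0..L} f"
  shows "(\<lambda>x. f x * indicator {\<tau>1<..<\<tau>2} x) \<in> borel_measurable borel"
  using borel_measurable_continuous_on_indicator[OF _ continuous_on_subset[OF assms Ioo_\<tau>_subset(1)]]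
  by (simp add: mult.commute)

text \<open>$\mu$ lives on $[0,L]$; transporting it to the Borel sets of $\mathbb{R}$ lets $\eta\,\mu$ on
  $(\tau_1, \tau_2)$ be compared with a Lebesgue density.\<close>

definition eta_\<mu> :: "real measure" where
  "eta_\<mu> = density (distr \<mu> borel (\<lambda>x. x)) (\<lambda>x. \<eta> x * indicator {\<tau>1<..<\<tau>2} x)"

lemma measurable_id_\<mu>: "(\<lambda>x::real. x) \<in> \<mu> \<rightarrow>\<^sub>M borel"
  using borel_measurable_\<mu>[OF continuous_on_id] by simp

lemma emeasure_eta_\<mu>_Ioc:
  assumes cd: "\<tau>1 < c" "c \<le> d" "d < \<tau>2"
  shows "emeasure eta_\<mu> {c<..d} = ennreal (integral {c..d} eta_density)"
proof -
  have "(\<lambda>x. \<eta> x * indicator {c<..d} x) = (\<lambda>x. (\<eta> x * indicator {\<tau>1<..<\<tau>2} x) * indicator {c<..d} x)"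
    using cd by (auto simp: fun_eq_iff indicator_def)
  moreover have "(\<lambda>x. (\<eta> x * indicator {\<tau>1<..<\<tau>2} x) * indicator {c<..d} x) \<in> borel_measurable borel"
    by (intro borel_measurable_times borel_measurable_indicator_Ioo_\<tau>[OF \<eta>_cont]) simp
  ultimately have meas: "(\<lambda>x. ennreal (\<eta> x * indicator {c<..d} x)) \<in> borel_measurable borel"
    by (simp add: measurable_compose[OF _ measurable_ennreal])
  have "emeasure eta_\<mu> {c<..d}
      = (\<integral>\<^sup>+ x. ennreal (\<eta> x * indicator {\<tau>1<..<\<tau>2} x) * indicator {c<..d} x \<partial>distr \<mu> borel (\<lambda>x. x))"
    unfolding eta_\<mu>_def
    using borel_measurable_indicator_Ioo_\<tau>[OF \<eta>_cont] by (intro emeasure_density) auto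
  also have "\<dots> = (\<integral>\<^sup>+ x. ennreal (\<eta> x * indicator {c<..d} x) \<partial>distr \<mu> borel (\<lambda>x. x))"
    using cd by (intro nn_integral_cong) (auto simp: indicator_def)
  also have "\<dots> = (\<integral>\<^sup>+ x. ennreal (\<eta> x * indicator {c<..d} x) \<partial>\<mu>)"
    using meas by (simp add: nn_integral_distr[OF measurable_id_\<mu>])
  also have "\<dots> = ennreal (integral\<^sup>L \<mu> (\<lambda>x. \<eta> x * indicator {c<..d} x))"
  proof (rule nn_integral_eq_integral)
    show "integrable \<mu> (\<lambda>x. \<eta> x * indicator {c<..d} x)"
      using cd Ioo_\<tau>_subset
      by (intro integrable_real_mult_indicator integrable_\<mu> \<eta>_cont sets_\<mu>I) auto
    show "AE x in \<mu>. 0 \<le> \<eta> x * indicator {c<..d} x"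
      using \<eta>_pos by (intro AE_I2) (auto simp: space_\<mu> indicator_def less_imp_le)
  qed
  also have "\<dots> = ennreal (integral {c..d} eta_density)"
    using eta_integral_Ioc[OF cd] by simp
  finally show ?thesis .
qed

lemma emeasure_eta_density_Ioc:
  assumes cd: "\<tau>1 < c" "c \<le> d" "d < \<tau>2"
  shows "emeasure (density lborel (\<lambda>x. eta_density x * indicator {\<tau>1<..<\<tau>2} x)) {c<..d}
    = ennreal (integral {c..d} eta_density)"
proof -
  have "emeasure (density lborel (\<lambda>x. eta_density x * indicator {\<tau>1<..<\<tau>2} x)) {c<..d}
      = (\<integral>\<^sup>+ x. ennreal (eta_density x * indicator {\<tau>1<..<\<tau>2} x) * indicator {c<..d} x \<partial>lborel)"
    using borel_measurable_indicator_Ioo_\<tau>[OF continuous_eta_density]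
    by (intro emeasure_density) auto
  also have "\<dots> = (\<integral>\<^sup>+ x. ennreal (indicator {c..d} x * eta_density x) \<partial>lborel)"
  proof (rule nn_integral_cong_AE)
    show "AE x in lborel. ennreal (eta_density x * indicator {\<tau>1<..<\<tau>2} x) * indicator {c<..d} x
        = ennreal (indicator {c..d} x * eta_density x)"
      using AE_lborel_singleton[of c] by eventually_elim (use cd in \<open>auto simp: indicator_def\<close>)
  qed
  also have "\<dots> = ennreal (integral {c..d} eta_density)"
  proof (rule nn_integral_has_integral_lebesgue)
    show "0 \<le> eta_density x" if "x \<in> {c..d}" for x
      using that cd by (intro eta_density_nonneg) auto
    have "continuous_on {c..d} eta_density"
      using cd Ioo_\<tau>_subset by (intro continuous_on_subset[OF continuous_eta_density]) auto
    then show "(eta_density has_integral integral {c..d} eta_density) {c..d}"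
      by (intro integrable_integral integrable_continuous_interval)
  qed
  finally show ?thesis .
qed

lemma eta_\<mu>_eq_density: "eta_\<mu> = density lborel (\<lambda>x. eta_density x * indicator {\<tau>1<..<\<tau>2} x)"
proof (rule measure_eqI)
  let ?N = "density lborel (\<lambda>x. eta_density x * indicator {\<tau>1<..<\<tau>2} x)"
  show "sets eta_\<mu> = sets ?N"
    by (simp add: eta_\<mu>_def)
  fix X assume "X \<in> sets eta_\<mu>"
  then have X: "X \<in> sets borel" by (simp add: eta_\<mu>_def)
  have restrict: "emeasure (density K (\<lambda>x. f x * indicator {\<tau>1<..<\<tau>2} x)) X
      = emeasure (density K (\<lambda>x. f x * indicator {\<tau>1<..<\<tau>2} x)) (X \<inter> {\<tau>1<..<\<tau>2})"
    if K: "sets K = sets borel" and f: "(\<lambda>x. f x * indicator {\<tau>1<..<\<tau>2} x) \<in> borel_measurable borel"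
    for K :: "real measure" and f :: "real \<Rightarrow> real"
  proof -
    have meas: "(\<lambda>x. ennreal (f x * indicator {\<tau>1<..<\<tau>2} x)) \<in> borel_measurable K"
      using measurable_compose[OF f measurable_ennreal] measurable_cong_sets[OF K refl] by blast
    have sets: "X \<in> sets K" "X \<inter> {\<tau>1<..<\<tau>2} \<in> sets K"
      using X K by auto
    show ?thesis
      unfolding emeasure_density[OF meas sets(1)] emeasure_density[OF meas sets(2)]
      by (intro nn_integral_cong) (simp add: indicator_def)
  qed
  have "emeasure eta_\<mu> (X \<inter> {\<tau>1<..<\<tau>2}) = emeasure ?N (X \<inter> {\<tau>1<..<\<tau>2})"
  proof (rule emeasure_eq_on_Ioo_if_eq_on_Ioc)
    show "sets eta_\<mu> = sets borel" "sets ?N = sets borel"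
      by (simp_all add: eta_\<mu>_def)
    show "emeasure eta_\<mu> {c<..d} = emeasure ?N {c<..d}" "emeasure eta_\<mu> {c<..d} < \<infinity>"
      if "\<tau>1 < c" "c \<le> d" "d < \<tau>2" for c d
      using emeasure_eta_\<mu>_Ioc[OF that] emeasure_eta_density_Ioc[OF that] by simp_all
    show "\<tau>1 < \<tau>2"
      using \<tau>1_less_\<rho>1 \<rho>2_less_\<tau>2 rho by simp
  qed (use X in auto)
  then show "emeasure eta_\<mu> X = emeasure ?N X"
    using restrict[of "distr \<mu> borel (\<lambda>x. x)" \<eta>] restrict[of lborel eta_density]
      borel_measurable_indicator_Ioo_\<tau>[OF \<eta>_cont]
      borel_measurable_indicator_Ioo_\<tau>[OF continuous_eta_density]
    by (simp add: eta_\<mu>_def)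
qed

lemma emeasure_\<mu>_eq_nn_integral_density:
  assumes A: "A \<in> sets borel" "A \<subseteq> {\<tau>1<..<\<tau>2}"
  shows "emeasure \<mu> A = (\<integral>\<^sup>+ x. ennreal (indicator A x * (eta_density x / \<eta> x)) \<partial>lborel)"
proof -
  let ?J = "{\<tau>1<..<\<tau>2}"
  have AL: "A \<subseteq> {0..L}" using A Ioo_\<tau>_subset by auto
  have \<eta>A: "0 < \<eta> x" if "x \<in> A" for x using that AL \<eta>_pos by auto
  have wA: "0 \<le> eta_density x" if "x \<in> A" for x using that A eta_density_nonneg by auto
  define g where "g x = ennreal (indicator A x * (1 / \<eta> x * indicator ?J x))" for x
  have "continuous_on {0..L} (\<lambda>x. 1 / \<eta> x)"
    using \<eta>_pos by (intro continuous_intros \<eta>_cont) force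
  then have g: "g \<in> borel_measurable borel"
    unfolding g_def using A(1) borel_measurable_indicator_Ioo_\<tau> by measurable
  have "emeasure \<mu> A = emeasure (distr \<mu> borel (\<lambda>x. x)) A"
    using A AL by (simp add: emeasure_distr[OF measurable_id_\<mu>] space_\<mu> Int_absorb2)
  also have "\<dots> = (\<integral>\<^sup>+ x. indicator A x \<partial>distr \<mu> borel (\<lambda>x. x))"
    using A(1) by simp
  also have "\<dots> = (\<integral>\<^sup>+ x. ennreal (\<eta> x * indicator ?J x) * g x \<partial>distr \<mu> borel (\<lambda>x. x))"
  proof (rule nn_integral_cong)
    fix x
    show "indicator A x = ennreal (\<eta> x * indicator ?J x) * g x"
    proof (cases "x \<in> A")
      case True
      then have "x \<in> ?J" "0 < \<eta> x" using A(2) \<eta>A by auto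
      then show ?thesis
        using True by (simp add: g_def ennreal_mult[symmetric])
    qed (simp add: g_def)
  qed
  also have "\<dots> = integral\<^sup>N eta_\<mu> g"
    unfolding eta_\<mu>_def using borel_measurable_indicator_Ioo_\<tau>[OF \<eta>_cont] g
    by (intro nn_integral_density[symmetric]) auto
  also have "\<dots> = (\<integral>\<^sup>+ x. ennreal (eta_density x * indicator ?J x) * g x \<partial>lborel)"
    unfolding eta_\<mu>_eq_density
    using borel_measurable_indicator_Ioo_\<tau>[OF continuous_eta_density] g
    by (intro nn_integral_density) auto
  also have "\<dots> = (\<integral>\<^sup>+ x. ennreal (indicator A x * (eta_density x / \<eta> x)) \<partial>lborel)"
  proof (rule nn_integral_cong)
    fix x
    show "ennreal (eta_density x * indicator ?J x) * g x
        = ennreal (indicator A x * (eta_density x / \<eta> x))"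
    proof (cases "x \<in> A")
      case True
      then have "x \<in> ?J" "0 < \<eta> x" "0 \<le> eta_density x" using A(2) \<eta>A wA by auto
      then show ?thesis
        using True by (simp add: g_def ennreal_mult[symmetric])
    qed (simp add: g_def)
  qed
  finally show ?thesis .
qed

lemma measure_eq_density_integral:
  assumes A: "A \<in> sets borel" "A \<subseteq> {\<tau>1<..<\<tau>2}"
  shows "measure \<mu> A = (LINT x:A|lborel. eta_density x / \<eta> x)"
proof -
  have AL: "A \<subseteq> {0..L}" using A Ioo_\<tau>_subset by auto
  have \<eta>A: "0 < \<eta> x" if "x \<in> A" for x using that AL \<eta>_pos by auto
  have wA: "0 \<le> eta_density x" if "x \<in> A" for x using that A eta_density_nonneg by auto
  have "emeasure \<mu> A = ennreal (LINT x:A|lborel. eta_density x / \<eta> x)"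
    unfolding emeasure_\<mu>_eq_nn_integral_density[OF A]
  proof (unfold set_lebesgue_integral_def real_scaleR_def, rule nn_integral_eq_integral)
    have "\<eta> x \<noteq> 0" if "x \<in> {\<tau>1..\<tau>2}" for x
      using that Ioo_\<tau>_subset(2) \<eta>_pos[of x] by auto
    then have "continuous_on {\<tau>1..\<tau>2} (\<lambda>x. eta_density x / \<eta> x)"
      using Ioo_\<tau>_subset(2)
      by (intro continuous_intros continuous_on_subset[OF continuous_eta_density]
          continuous_on_subset[OF \<eta>_cont]) auto
    then have "integrable lborel (\<lambda>x. indicator {\<tau>1..\<tau>2} x *\<^sub>R (eta_density x / \<eta> x) * indicator A x)"
      using A(1) by (intro integrable_real_mult_indicator borel_integrable_compact) auto
    moreover have "(\<lambda>x. indicator {\<tau>1..\<tau>2} x *\<^sub>R (eta_density x / \<eta> x) * indicator A x)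
        = (\<lambda>x. indicator A x * (eta_density x / \<eta> x))"
      using A(2) by (auto simp: indicator_def fun_eq_iff)
    ultimately show "integrable lborel (\<lambda>x. indicator A x * (eta_density x / \<eta> x))"
      by (simp only:)
    show "AE x in lborel. 0 \<le> indicator A x * (eta_density x / \<eta> x)"
      using wA \<eta>A by (intro AE_I2) (auto simp: indicator_def less_imp_le)
  qed
  moreover have "0 \<le> (LINT x:A|lborel. eta_density x / \<eta> x)"
    unfolding set_lebesgue_integral_def using wA \<eta>A
    by (intro integral_nonneg_AE AE_I2) (auto simp: indicator_def less_imp_le)
  ultimately show ?thesis
    by (simp add: measure_def)
qed

lemma Shat_ODE_outside_contact:
  "\<exists>D1 D2. \<forall>x\<in>{0<..<\<tau>1} \<union> {\<tau>2<..<L}.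
    (Shat has_real_derivative D1 x) (at x) \<and> (D1 has_real_derivative D2 x) (at x) \<and>
    - dS * D2 x = \<Lambda> - Shat x"
proof -
  define D1 where "D1 x =
    (if x < \<tau>1 then source_primitive x else source_primitive x - source_primitive L) / dS" for x
  define D2 where "D2 x = (Shat x - \<Lambda>) / dS" for x
  have "(Shat has_real_derivative D1 x) (at x) \<and> (D1 has_real_derivative D2 x) (at x)"
    if x: "x \<in> {0<..<\<tau>1} \<union> {\<tau>2<..<L}" for x
  proof -
    have G': "(source_primitive has_real_derivative Shat x - \<Lambda>) (at x)"
      using x \<tau>_range by (intro has_real_derivative_source_primitive_at) auto
    consider "x \<in> {0<..<\<tau>1}" | "x \<in> {\<tau>2<..<L}" using x by blast
    then show ?thesis
    proof cases
      case 1
      have "((\<lambda>y. source_primitive y / dS) has_real_derivative D2 x) (at x)"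
        unfolding D2_def by (rule DERIV_cdivide[OF G'])
      then have "(D1 has_real_derivative D2 x) (at x)"
        by (rule has_field_derivative_transform_within_open[OF _ open_greaterThanLessThan 1])
          (simp add: D1_def)
      then show ?thesis
        using Shat_has_derivative_left_at[OF 1] 1 by (simp add: D1_def)
    next
      case 2
      have "((\<lambda>y. (source_primitive y - source_primitive L) / dS) has_real_derivative D2 x) (at x)"
        unfolding D2_def using DERIV_cdivide[OF DERIV_diff[OF G' DERIV_const]] by simp
      then have "(D1 has_real_derivative D2 x) (at x)"
        by (rule has_field_derivative_transform_within_open[OF _ open_greaterThanLessThan 2])
          (use \<tau>_range in \<open>auto simp: D1_def\<close>)
      then show ?thesis
        using Shat_has_derivative_right_at[OF 2] 2 \<tau>_range by (simp add: D1_def)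
    qed
  qed
  moreover have "- dS * D2 x = \<Lambda> - Shat x" for x
    using dS_pos by (simp add: D2_def)
  ultimately show ?thesis
    by blast
qed

lemma Shat_Neumann:
  "(Shat has_real_derivative 0) (at 0 within {0..L})"
  "(Shat has_real_derivative 0) (at L within {0..L})"
proof -
  have "at 0 within {0..L} = at 0 within {0..\<tau>1}"
    using \<tau>1_pos \<tau>_range by (intro at_within_nhd[of _ "{..<\<tau>1}"]) auto
  then show "(Shat has_real_derivative 0) (at 0 within {0..L})"
    using Shat_has_derivative_left[of 0] \<tau>1_pos by (simp add: source_primitive_def)
  have "at L within {0..L} = at L within {\<tau>2..L}"
    using \<tau>2_less_L \<tau>_range by (intro at_within_nhd[of _ "{\<tau>2<..}"]) auto
  then show "(Shat has_real_derivative 0) (at L within {0..L})"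
    using Shat_has_derivative_right[of L] \<tau>2_less_L by simp
qed

lemma emeasure_outside_Icc_\<tau>: "emeasure \<mu> ({0..<\<tau>1} \<union> {\<tau>2<..L}) = 0"
proof -
  have "{0..<\<tau>1} \<in> null_sets \<mu>" "{\<tau>2<..L} \<in> null_sets \<mu>"
    using emeasure_outside_contact \<tau>_range by (auto intro!: null_sets_\<mu>I)
  then have "{0..<\<tau>1} \<union> {\<tau>2<..L} \<in> null_sets \<mu>"
    by (rule null_sets.Un)
  then show ?thesis
    by (rule null_setsD1)
qed

theorem contact_structure:
  "\<exists>\<tau>1 \<tau>2. 0 < \<tau>1 \<and> \<tau>1 < \<rho>1 \<and> \<rho>2 < \<tau>2 \<and> \<tau>2 < L \<and>
     (\<forall>x\<in>{\<tau>1..\<tau>2}. Shat x = h x) \<and>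
     (\<exists>D1 D2. \<forall>x\<in>{0<..<\<tau>1} \<union> {\<tau>2<..<L}.
         (Shat has_real_derivative D1 x) (at x) \<and>
         (D1 has_real_derivative D2 x) (at x) \<and>
         - dS * D2 x = \<Lambda> - Shat x) \<and>
     (Shat has_real_derivative 0) (at 0 within {0..L}) \<and>
     (Shat has_real_derivative 0) (at L within {0..L}) \<and>
     Shat \<tau>1 = h \<tau>1 \<and> Shat \<tau>2 = h \<tau>2 \<and>
     (\<forall>A\<in>sets borel. A \<subseteq> {\<tau>1<..<\<tau>2} \<longrightarrow>
         measure \<mu> A = (LINT x:A|lborel. (\<Lambda> - h x + dS * h2 x) / \<eta> x)) \<and>
     emeasure \<mu> ({0..<\<tau>1} \<union> {\<tau>2<..L}) = 0"
  using \<tau>1_pos \<tau>1_less_\<rho>1 \<rho>2_less_\<tau>2 \<tau>2_less_L Shat_eq_h_between Shat_ODE_outside_contact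
    Shat_Neumann Shat_\<tau> measure_eq_density_integral emeasure_outside_Icc_\<tau>
  unfolding eta_density_def by blast

end

lemma endemic_eq_reduced:
  assumes "endemic_eq L dS \<Lambda> \<beta> \<gamma> \<eta> dI S I"
    and h: "\<And>x. x \<in> {0<..<L} \<Longrightarrow> \<beta> x * h x = \<gamma> x + \<eta> x"
  shows "\<exists>S1 S2 I1 I2. C2_with {0..L} S S1 S2 \<and> C2_with {0..L} I I1 I2 \<and>
    (\<forall>x\<in>{0..L}. 0 < I x) \<and>
    (\<forall>x\<in>{0<..<L}. dI * I2 x = \<beta> x * (h x - S x) * I x \<and>
      dS * S2 x + dI * I2 x = S x - \<Lambda> + \<eta> x * I x) \<and>
    S1 0 = 0 \<and> S1 L = 0 \<and> I1 0 = 0 \<and> I1 L = 0"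
proof -
  obtain S1 S2 I1 I2 where C2: "C2_with {0..L} S S1 S2" "C2_with {0..L} I I1 I2"
    and pos: "\<forall>x\<in>{0..L}. 0 < S x \<and> 0 < I x"
    and eqs: "\<forall>x\<in>{0<..<L}. - dS * S2 x = \<Lambda> - S x - \<beta> x * S x * I x + \<gamma> x * I x \<and>
        - dI * I2 x = \<beta> x * S x * I x - (\<gamma> x + \<eta> x) * I x"
    and bc: "S1 0 = 0" "S1 L = 0" "I1 0 = 0" "I1 L = 0"
    using assms(1) unfolding endemic_eq_def by blast
  have "dI * I2 x = \<beta> x * (h x - S x) * I x \<and> dS * S2 x + dI * I2 x = S x - \<Lambda> + \<eta> x * I x"
    if x: "x \<in> {0<..<L}" for x
    using eqs[rule_format, OF x] h[OF x] by algebra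
  then show ?thesis
    using C2 pos bc by blast
qed

lemma endemic_eq_sequence_reduced:
  assumes equil: "\<And>n. endemic_eq L dS \<Lambda> \<beta> \<gamma> \<eta> (dI n) (S n) (I n)"
    and h: "\<And>x. x \<in> {0<..<L} \<Longrightarrow> \<beta> x * h x = \<gamma> x + \<eta> x"
  obtains S1 S2 I1 I2 where
    "\<And>n. C2_with {0..L} (S n) (S1 n) (S2 n)" "\<And>n. C2_with {0..L} (I n) (I1 n) (I2 n)"
    "\<And>n x. x \<in> {0..L} \<Longrightarrow> 0 < I n x"
    "\<And>n x. x \<in> {0<..<L} \<Longrightarrow> dI n * I2 n x = \<beta> x * (h x - S n x) * I n x"
    "\<And>n x. x \<in> {0<..<L} \<Longrightarrow> dS * S2 n x + dI n * I2 n x = S n x - \<Lambda> + \<eta> x * I n x"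
    "\<And>n. S1 n 0 = 0" "\<And>n. S1 n L = 0" "\<And>n. I1 n 0 = 0" "\<And>n. I1 n L = 0"
proof -
  obtain S1 S2 I1 I2 where reduced: "\<And>n. C2_with {0..L} (S n) (S1 n) (S2 n) \<and>
      C2_with {0..L} (I n) (I1 n) (I2 n) \<and> (\<forall>x\<in>{0..L}. 0 < I n x) \<and>
      (\<forall>x\<in>{0<..<L}. dI n * I2 n x = \<beta> x * (h x - S n x) * I n x \<and>
        dS * S2 n x + dI n * I2 n x = S n x - \<Lambda> + \<eta> x * I n x) \<and>
      S1 n 0 = 0 \<and> S1 n L = 0 \<and> I1 n 0 = 0 \<and> I1 n L = 0"
    using endemic_eq_reduced[OF equil h] by metis
  show ?thesis
    by (rule that) (use reduced in blast)+
qed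

theorem lemma3p4:
  fixes L dS \<Lambda> \<rho>1 \<rho>2 :: real
    and \<beta> \<gamma> \<eta> h h1 h2 Shat :: "real \<Rightarrow> real"
    and dI :: "nat \<Rightarrow> real"
    and S I :: "nat \<Rightarrow> real \<Rightarrow> real"
    and \<mu> :: "real measure"
  assumes L_pos: "L > 0" and dS_pos: "dS > 0" and Lambda_pos: "\<Lambda> > 0"
    and coef_holder: "holder_on {0..L} \<beta>" "holder_on {0..L} \<gamma>" "holder_on {0..L} \<eta>"
    and coef_pos: "\<forall>x\<in>{0..L}. \<beta> x > 0 \<and> \<gamma> x > 0 \<and> \<eta> x > 0"
    and h_def: "h = (\<lambda>x. (\<gamma> x + \<eta> x) / \<beta> x)"
    and Lambda_gt_h: "\<forall>x\<in>{0..L}. \<Lambda> > h x"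
    and dI_pos: "\<forall>n. dI n > 0" and dI_lim: "dI \<longlonglongrightarrow> 0"
    and equil: "\<forall>n. endemic_eq L dS \<Lambda> \<beta> \<gamma> \<eta> (dI n) (S n) (I n)"
    and S_unif: "uniform_limit {0..L} S Shat sequentially"
    and mu_sets: "sets \<mu> = sets (restrict_space borel {0..L})"
    and mu_finite: "finite_measure \<mu>"
    and I_weak: "\<forall>\<zeta>. continuous_on {0..L} \<zeta> \<longrightarrow>
        (\<lambda>n. integral {0..L} (\<lambda>x. I n x * \<zeta> x)) \<longlonglongrightarrow> integral\<^sup>L \<mu> \<zeta>"
    and h_C2: "C2_with {0..L} h h1 h2"
    and Theta: "{x\<in>{0..L}. h x = Inf (h ` {0..L})} = {\<rho>1..\<rho>2}"
    and rho: "0 < \<rho>1" "\<rho>1 < \<rho>2" "\<rho>2 < L"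
    and h1_mono: "mono_on ({0..\<rho>1} \<union> {\<rho>2..L}) h1"
  shows "\<exists>\<tau>1 \<tau>2. 0 < \<tau>1 \<and> \<tau>1 < \<rho>1 \<and> \<rho>2 < \<tau>2 \<and> \<tau>2 < L \<and>
     (\<forall>x\<in>{\<tau>1..\<tau>2}. Shat x = h x) \<and>
     (\<exists>D1 D2. \<forall>x\<in>{0<..<\<tau>1} \<union> {\<tau>2<..<L}.
         (Shat has_real_derivative D1 x) (at x) \<and>
         (D1 has_real_derivative D2 x) (at x) \<and>
         - dS * D2 x = \<Lambda> - Shat x) \<and>
     (Shat has_real_derivative 0) (at 0 within {0..L}) \<and>
     (Shat has_real_derivative 0) (at L within {0..L}) \<and>
     Shat \<tau>1 = h \<tau>1 \<and> Shat \<tau>2 = h \<tau>2 \<and>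
     (\<forall>A\<in>sets borel. A \<subseteq> {\<tau>1<..<\<tau>2} \<longrightarrow>
         measure \<mu> A = (LINT x:A|lborel. (\<Lambda> - h x + dS * h2 x) / \<eta> x)) \<and>
     emeasure \<mu> ({0..<\<tau>1} \<union> {\<tau>2<..L}) = 0"
proof -
  have "\<beta> x * h x = \<gamma> x + \<eta> x" if "x \<in> {0<..<L}" for x
    using coef_pos[rule_format, of x] that unfolding h_def by auto
  then obtain S1 S2 I1 I2 where
    "\<And>n. C2_with {0..L} (S n) (S1 n) (S2 n)" "\<And>n. C2_with {0..L} (I n) (I1 n) (I2 n)"
    "\<And>n x. x \<in> {0..L} \<Longrightarrow> 0 < I n x"
    "\<And>n x. x \<in> {0<..<L} \<Longrightarrow> dI n * I2 n x = \<beta> x * (h x - S n x) * I n x"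
    "\<And>n x. x \<in> {0<..<L} \<Longrightarrow> dS * S2 n x + dI n * I2 n x = S n x - \<Lambda> + \<eta> x * I n x"
    "\<And>n. S1 n 0 = 0" "\<And>n. S1 n L = 0" "\<And>n. I1 n 0 = 0" "\<And>n. I1 n L = 0"
    using endemic_eq_sequence_reduced equil by blast
  then interpret endemic_limit L dS \<Lambda> \<rho>1 \<rho>2 \<beta> \<eta> h h1 h2 Shat dI S S1 S2 I I1 I2 \<mu>
    using L_pos dS_pos holder_on_imp_continuous_on[OF coef_holder(1)]
      holder_on_imp_continuous_on[OF coef_holder(3)] coef_pos Lambda_gt_h dI_pos dI_lim S_unif
      mu_sets mu_finite I_weak h_C2 Theta rho h1_mono
    by (intro endemic_limit.intro) auto
  show ?thesis
    by (rule contact_structure)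
qed

end
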